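(* There is an absolute constant $c>0$ such that for all positive integers $n,k$ with $k\le 2^{n/50}$ for which $w<n/2$ (with $w,p$ as in the context), the chain $\widetilde P^{\mathsf{grev}}$ on $\mathsf{Generic}_{k,n}$ satisfies $$\alpha\bigl(\widetilde P^{\mathsf{grev}}\bigr)\;\ge\;\frac{c}{nk}.$$
   Context: Generic states: let $w=\lceil 10(\log_2 k+\log_2 n)\rceil$ and $p=\lceil n/(2w)\rceil$. Fix a partition of $[n]$ into sets $C_1,\dots,C_p,C$ with $|C_t|=w$ for $t\in[p]$ and $|C|=n-pw$. For $x\in\{0,1\}^n$ and $S\subseteq[n]$, $x_S$ denotes the restriction of $x$ to the coordinates in $S$; for a tuple $x=(x_1,\dots,x_k)$ of $n$-bit strings, $x_{i,j}$ is the $j$-th bit of $x_i$. A tuple $(x_1,\dots,x_k)$ of $n$-bit strings is generic if for every $i\ne i'$ and every $t\in[p]$, $x_{i,C_t}\ne x_{i',C_t}$. $\mathsf{Generic}_{k,n}$ is the set of generic tuples. Product chain $\widetilde P^{\mathsf{grev}}$ on $\mathsf{Generic}_{k,n}$: from current state $x$, the next state $\boldsymbol y$ is sampled as follows. With probability $1/2$: toss a fair coin; on heads set $\boldsymbol y=x$; on tails pick uniform $\boldsymbol c\in C$, $\boldsymbol r\in[k]$ and let $\boldsymbol y$ be $x$ with the bit $x_{\boldsymbol r,\boldsymbol c}$ flipped. With the other probability $1/2$: pick uniform $\boldsymbol\ell\in[p]$, $\boldsymbol r\in[k]$ and a uniformly random string $\boldsymbol u\in\{0,1\}^w$ subject to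 $\boldsymbol u\ne x_{i,C_{\boldsymbol\ell}}$ for all $i\ne\boldsymbol r$, and let $\boldsymbol y$ be $x$ with $x_{\boldsymbol r,C_{\boldsymbol\ell}}$ replaced by $\boldsymbol u$ (all other bits unchanged). Its stationary distribution is uniform on $\mathsf{Generic}_{k,n}$. Log-Sobolev constant: for an ergodic chain $P$ on finite $V$ with stationary $\pi$, $\mathcal E_P(g,g)=\frac12\sum_{x,y}(g(x)-g(y))^2\pi(x)P(x,y)$, $\mathrm{Ent}_\pi[f]=\sum_x\pi(x)f(x)\log\frac{f(x)}{\mathbb E_\pi f}$ for $f\ge0$ (natural log), and $\alpha(P)=\inf\{\mathcal E_P(\sqrt f,\sqrt f)/\mathrm{Ent}_\pi[f]: f\ge0\text{ non-constant}\}$. *)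

theory Defs
  imports Complex_Main
begin

definition dirichlet_form :: "'a set \<Rightarrow> ('a \<Rightarrow> real) \<Rightarrow> ('a \<Rightarrow> 'a \<Rightarrow> real) \<Rightarrow> ('a \<Rightarrow> real) \<Rightarrow> real" where
  "dirichlet_form V mu P g = (1/2) * (\<Sum>x\<in>V. \<Sum>y\<in>V. (g x - g y)^2 * mu x * P x y)"

definition entropy :: "'a set \<Rightarrow> ('a \<Rightarrow> real) \<Rightarrow> ('a \<Rightarrow> real) \<Rightarrow> real" where
  "entropy V mu f = (\<Sum>x\<in>V. mu x * f x * ln (f x / (\<Sum>y\<in>V. mu y * f y)))"

text \<open>Log-Sobolev constant (natural log; note 0 * ln 0 = 0 in Isabelle).\<close>
definition log_sobolev :: "'a set \<Rightarrow> ('a \<Rightarrow> real) \<Rightarrow> ('a \<Rightarrow> 'a \<Rightarrow> real) \<Rightarrow> real" where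
  "log_sobolev V mu P = Inf {dirichlet_form V mu P (\<lambda>x. sqrt (f x)) / entropy V mu f | f.
       (\<forall>x\<in>V. 0 \<le> f x) \<and> (\<exists>x\<in>V. \<exists>y\<in>V. f x \<noteq> f y)}"

definition wpar :: "nat \<Rightarrow> nat \<Rightarrow> nat" where
  "wpar k n = nat \<lceil>10 * (log 2 (real k) + log 2 (real n))\<rceil>"

definition ppar :: "nat \<Rightarrow> nat \<Rightarrow> nat" where
  "ppar k n = nat \<lceil>real n / (2 * real (wpar k n))\<rceil>"

text \<open>A tuple of k n-bit strings is a function x with x i j the j-th bit of the i-th
  string (indices 0-based: i < k, j < n), extensional (False outside the range).
  Blocks C_1..C_p are B 0 .. B (p-1), the leftover set is C.\<close>

type_synonym tuple = "nat \<Rightarrow> nat \<Rightarrow> bool"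

definition generic_set :: "nat \<Rightarrow> nat \<Rightarrow> (nat \<Rightarrow> nat set) \<Rightarrow> tuple set" where
  "generic_set k n B = {x. (\<forall>i j. (k \<le> i \<or> n \<le> j) \<longrightarrow> \<not> x i j) \<and>
      (\<forall>i<k. \<forall>i'<k. i \<noteq> i' \<longrightarrow> (\<forall>t<ppar k n. \<exists>j\<in>B t. x i j \<noteq> x i' j))}"

definition flip_bit :: "tuple \<Rightarrow> nat \<Rightarrow> nat \<Rightarrow> tuple" where
  "flip_bit x r c = x(r := (x r)(c := \<not> x r c))"

definition repl_set :: "nat \<Rightarrow> (nat \<Rightarrow> nat set) \<Rightarrow> tuple \<Rightarrow> nat \<Rightarrow> nat \<Rightarrow> tuple set" where
  "repl_set k B x l r = {y. (\<forall>i j. (i \<noteq> r \<or> j \<notin> B l) \<longrightarrow> y i j = x i j) \<and>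
      (\<forall>i<k. i \<noteq> r \<longrightarrow> (\<exists>j\<in>B l. y r j \<noteq> x i j))}"

definition P_grev :: "nat \<Rightarrow> nat \<Rightarrow> (nat \<Rightarrow> nat set) \<Rightarrow> nat set \<Rightarrow> tuple \<Rightarrow> tuple \<Rightarrow> real" where
  "P_grev k n B C x y =
     (if x = y then 1/4 else 0)
     + (1/4) * real (card {(c, r). c \<in> C \<and> r < k \<and> flip_bit x r c = y}) / (real (card C) * real k)
     + (1/2) * (\<Sum>l<ppar k n. \<Sum>r<k.
          (if y \<in> repl_set k B x l r then 1 / real (card (repl_set k B x l r)) else 0))
          / (real (ppar k n) * real k)"

definition uniform_on :: "'a set \<Rightarrow> 'a \<Rightarrow> real" where
  "uniform_on V x = 1 / real (card V)"

end

theory Submission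
  imports Defs
begin

text \<open>Extend a density \<open>f\<close> on \<open>V = Generic\<^sub>k\<^sub>,\<^sub>n\<close> by its mean to the
  whole cube \<open>{0,1}\<^sup>k\<^sup>\<times>\<^sup>n\<close>. There entropy tensorises exactly over the coordinate blocks of the
  product chain: the blocks \<open>C\<^sub>l\<close> of each string and the single bits in \<open>C\<close>. Returning from a
  block's subcube to its slice of \<open>V\<close> costs a Bregman-divergence penalty weighted by the square
  root of the fraction of the subcube outside \<open>V\<close>; as \<open>w \<ge> 10 log\<^sub>2 (kn)\<close>, that fraction is at
  most \<open>k/2\<^sup>w\<close> and all penalties together are at most half the entropy of \<open>f\<close>. Hence the entropy
  of \<open>f\<close> is at most twice the sum of its entropies on the slices. On each slice the complete-graph
  log-Sobolev inequality applies, with constant \<open>O(w)\<close> on a block and \<open>O(1)\<close> on a bit, and the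
  slice variances add up to the Dirichlet form of the chain, up to the factors \<open>pk\<close> and \<open>|C|k\<close>.
  Since \<open>wp\<close> and \<open>|C|\<close> are \<open>O(n)\<close>, this yields \<open>\<alpha> \<ge> 1/(32nk)\<close>.\<close>

section \<open>Averages, entropy and variance under the uniform distribution\<close>

definition avg :: "'a set \<Rightarrow> ('a \<Rightarrow> real) \<Rightarrow> real" where
  "avg A F = (\<Sum>x\<in>A. F x) / real (card A)"

definition ent :: "'a set \<Rightarrow> ('a \<Rightarrow> real) \<Rightarrow> real" where
  "ent A F = (\<Sum>x\<in>A. F x * ln (F x / avg A F)) / real (card A)"

definition var :: "'a set \<Rightarrow> ('a \<Rightarrow> real) \<Rightarrow> real" where
  "var A g = (\<Sum>y\<in>A. \<Sum>z\<in>A. (g y - g z)^2) / (2 * real (card A)^2)"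

lemma card_mult_avg: "real (card A) * avg A F = (\<Sum>x\<in>A. F x)"
  unfolding avg_def by (cases "card A = 0") (auto simp: card_eq_0_iff)

lemma card_mult_ent: "real (card A) * ent A F = (\<Sum>x\<in>A. F x * ln (F x / avg A F))"
  unfolding ent_def by (cases "card A = 0") (auto simp: card_eq_0_iff)

lemma avg_cong: "(\<And>x. x \<in> A \<Longrightarrow> f x = g x) \<Longrightarrow> avg A f = avg A g"
  unfolding avg_def by (simp cong: sum.cong)

lemma avg_mono: "(\<And>x. x \<in> A \<Longrightarrow> f x \<le> g x) \<Longrightarrow> avg A f \<le> avg A g"
  unfolding avg_def by (intro divide_right_mono sum_mono) auto

lemma avg_sum: "avg A (\<lambda>x. \<Sum>i\<in>J. g i x) = (\<Sum>i\<in>J. avg A (g i))"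
  unfolding avg_def by (simp add: sum.swap[of _ A J] sum_divide_distrib)

lemma avg_nonneg: "(\<And>x. x \<in> A \<Longrightarrow> 0 \<le> F x) \<Longrightarrow> 0 \<le> avg A F"
  unfolding avg_def by (simp add: sum_nonneg)

lemma avg_pos:
  assumes "finite A" "\<And>x. x \<in> A \<Longrightarrow> 0 \<le> F x" "x \<in> A" "0 < F x"
  shows "0 < avg A F"
proof -
  have "F x \<le> (\<Sum>x\<in>A. F x)" by (rule member_le_sum) (use assms in auto)
  moreover have "0 < real (card A)" using assms by (auto simp: card_gt_0_iff)
  ultimately show ?thesis unfolding avg_def using assms by simp
qed

lemma ent_cong: "(\<And>x. x \<in> A \<Longrightarrow> F x = G x) \<Longrightarrow> ent A F = ent A G"
  using avg_cong[of A F G] unfolding ent_def by (simp cong: sum.cong)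

lemma ent_const: "(\<And>x. x \<in> A \<Longrightarrow> F x = c) \<Longrightarrow> ent A F = 0"
proof (cases "finite A \<and> A \<noteq> {}")
  case True
  assume "\<And>x. x \<in> A \<Longrightarrow> F x = c"
  moreover from this have "avg A F = c" unfolding avg_def using True by (simp add: card_gt_0_iff)
  ultimately show ?thesis unfolding ent_def by (cases "c = 0") simp_all
qed (auto simp: ent_def)

lemma avg_image: "inj_on h S \<Longrightarrow> avg (h ` S) F = avg S (F \<circ> h)"
  unfolding avg_def by (simp add: sum.reindex card_image)

lemma ent_image: "inj_on h S \<Longrightarrow> ent (h ` S) F = ent S (F \<circ> h)"
  unfolding ent_def by (simp add: avg_image sum.reindex card_image)

lemma avg_product_snd:
  assumes "finite Y" "Y \<noteq> {}" "finite U"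
  shows "avg (Y \<times> U) (\<lambda>p. g (snd p)) = avg U g"
  using assms unfolding avg_def card_cartesian_product
  by (simp add: sum.cartesian_product' card_gt_0_iff field_simps)

lemma avg_product_fst:
  assumes "finite U" "U \<noteq> {}" "finite Y"
  shows "avg (Y \<times> U) (\<lambda>p. g (fst p)) = avg Y g"
  using assms unfolding avg_def card_cartesian_product
  by (simp add: sum.cartesian_product' card_gt_0_iff field_simps sum_distrib_right[symmetric])

lemma ln_ge_one_minus_inverse: "0 < (z::real) \<Longrightarrow> 1 - 1/z \<le> ln z"
  using ln_le_minus_one[of "1/z"] by (simp add: ln_div)

lemma ln_less_minus_one:
  assumes "0 < (x::real)" "x \<noteq> 1"
  shows "ln x < x - 1"
proof -
  have "ln x = 2 * ln (sqrt x)" using assms by (simp add: ln_sqrt)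
  also have "\<dots> \<le> 2 * (sqrt x - 1)" using ln_le_minus_one[of "sqrt x"] assms by simp
  also have "\<dots> < x - 1"
  proof -
    have "0 < (sqrt x - 1)^2" using assms by simp
    also have "(sqrt x - 1)^2 = x - 2 * sqrt x + 1" using assms
      by (simp add: power2_eq_square algebra_simps)
    finally show ?thesis by simp
  qed
  finally show ?thesis .
qed

lemma ln_gt_one_minus_inverse: "0 < (z::real) \<Longrightarrow> z \<noteq> 1 \<Longrightarrow> 1 - 1/z < ln z"
  using ln_less_minus_one[of "1/z"] by (simp add: ln_div)

lemma mult_ln_div_split:
  fixes a b c :: real
  assumes "0 \<le> a" "0 < a \<Longrightarrow> 0 < b" "0 < a \<Longrightarrow> 0 < c"
  shows "a * ln (a / c) = a * ln (a / b) + a * ln (b / c)"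
  using assms by (cases "a = 0") (auto simp: ln_div algebra_simps)

lemma mult_ln_div_ge:
  fixes a b :: real
  assumes "0 \<le> a" "0 < b"
  shows "a - b \<le> a * ln (a / b)"
proof (cases "a = 0")
  case False
  then have a: "0 < a" using assms by simp
  have "a * (1 - 1 / (a / b)) \<le> a * ln (a / b)"
    using ln_ge_one_minus_inverse[of "a / b"] a assms by (simp add: mult_left_mono)
  moreover have "a * (1 - 1 / (a / b)) = a - b" using a assms by (simp add: field_simps)
  ultimately show ?thesis by simp
qed (use assms in simp)

lemma mult_ln_div_gt:
  fixes a b :: real
  assumes "0 < a" "0 < b" "a \<noteq> b"
  shows "a - b < a * ln (a / b)"
proof -
  have "a * (1 - 1 / (a / b)) < a * ln (a / b)"
    using ln_gt_one_minus_inverse[of "a / b"] assms by simp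
  moreover have "a * (1 - 1 / (a / b)) = a - b" using assms by (simp add: field_simps)
  ultimately show ?thesis by simp
qed

lemma log_sum_inequality:
  fixes a b :: "'u \<Rightarrow> real"
  assumes fin: "finite U" and a0: "\<And>u. u \<in> U \<Longrightarrow> 0 \<le> a u" and b0: "\<And>u. u \<in> U \<Longrightarrow> 0 \<le> b u"
    and ab: "\<And>u. u \<in> U \<Longrightarrow> 0 < a u \<Longrightarrow> 0 < b u"
  shows "(\<Sum>u\<in>U. a u) * ln ((\<Sum>u\<in>U. a u) / (\<Sum>u\<in>U. b u)) \<le> (\<Sum>u\<in>U. a u * ln (a u / b u))"
proof (cases "(\<Sum>u\<in>U. a u) = 0")
  case True
  then have "\<forall>u\<in>U. a u = 0" using sum_nonneg_eq_0_iff[OF fin] a0 by blast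
  then show ?thesis using True by simp
next
  case False
  define A where "A = (\<Sum>u\<in>U. a u)"
  define B where "B = (\<Sum>u\<in>U. b u)"
  obtain u0 where u0: "u0 \<in> U" "0 < a u0"
    using False a0 sum_nonneg_eq_0_iff[OF fin, of a] by (auto simp: less_le)
  have A0: "0 < A" unfolding A_def using False a0 by (simp add: less_le sum_nonneg)
  have B0: "0 < B" unfolding B_def
    using ab[OF u0] member_le_sum[of u0 U b, OF u0(1) b0 fin] by simp
  \<comment> \<open>Pointwise \<open>ln x \<ge> 1 - 1/x\<close> at \<open>x = (a u / b u) / (A / B)\<close>; the linear terms cancel in the sum.\<close>
  have "a u * ln (A / B) + a u - b u * (A / B) \<le> a u * ln (a u / b u)" if u: "u \<in> U" for u
  proof (cases "a u = 0")
    case False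
    then have au: "0 < a u" using a0[OF u] by simp
    have bu: "0 < b u" using ab[OF u au] .
    have "a u - b u * (A / B) \<le> a u * ln (a u / (b u * (A / B)))"
      using mult_ln_div_ge[of "a u" "b u * (A / B)"] au bu A0 B0 by simp
    also have "\<dots> = a u * ln (a u / b u) - a u * ln (A / B)"
      using au bu A0 B0 by (simp add: ln_div ln_mult algebra_simps)
    finally show ?thesis by simp
  qed (use b0[OF u] A0 B0 in simp)
  then have "(\<Sum>u\<in>U. a u * ln (A / B) + a u - b u * (A / B)) \<le> (\<Sum>u\<in>U. a u * ln (a u / b u))"
    by (intro sum_mono)
  moreover have "(\<Sum>u\<in>U. a u * ln (A / B) + a u - b u * (A / B)) = A * ln (A / B)"
    using B0 unfolding A_def B_def
    by (simp add: sum.distrib sum_subtractf sum_distrib_right[symmetric] sum_divide_distrib[symmetric])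
  ultimately show ?thesis unfolding A_def B_def by simp
qed

lemma log_sum_inequality_two:
  fixes a1 a2 b1 b2 :: real
  assumes "0 \<le> a1" "0 \<le> a2" "0 \<le> b1" "0 \<le> b2" "0 < a1 \<Longrightarrow> 0 < b1" "0 < a2 \<Longrightarrow> 0 < b2"
  shows "(a1 + a2) * ln ((a1 + a2) / (b1 + b2)) \<le> a1 * ln (a1 / b1) + a2 * ln (a2 / b2)"
proof -
  have "(\<Sum>u\<in>UNIV. if u then a1 else a2) * ln ((\<Sum>u\<in>UNIV. if u then a1 else a2) / (\<Sum>u\<in>UNIV. if u then b1 else b2))
    \<le> (\<Sum>u\<in>UNIV. (if u then a1 else a2) * ln ((if u then a1 else a2) / (if u then b1 else b2)))"
    by (rule log_sum_inequality) (use assms in auto)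
  then show ?thesis by (simp add: UNIV_bool add.commute)
qed

lemma ent_nonneg:
  assumes fin: "finite A" and F0: "\<And>x. x \<in> A \<Longrightarrow> 0 \<le> F x"
  shows "0 \<le> ent A F"
proof (cases "A = {}")
  case False
  have "(\<Sum>x\<in>A. F x) * ln ((\<Sum>x\<in>A. F x) / (\<Sum>x\<in>A. avg A F)) \<le> (\<Sum>x\<in>A. F x * ln (F x / avg A F))"
    by (rule log_sum_inequality[OF fin F0]) (use avg_pos[OF fin F0] avg_nonneg[of A F] F0 in auto)
  moreover have "(\<Sum>x\<in>A. avg A F) = (\<Sum>x\<in>A. F x)" using card_mult_avg[of A F] by simp
  ultimately have "0 \<le> (\<Sum>x\<in>A. F x * ln (F x / avg A F))"
    by (cases "(\<Sum>x\<in>A. F x) = 0") auto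
  then show ?thesis unfolding ent_def by simp
qed (simp add: ent_def)

lemma ent_pos:
  assumes fin: "finite A" and F0: "\<And>x. x \<in> A \<Longrightarrow> 0 \<le> F x"
    and x: "x \<in> A" and y: "y \<in> A" and ne: "F x \<noteq> F y"
  shows "0 < ent A F"
proof -
  define m where "m = avg A F"
  have cA: "0 < real (card A)" using x fin by (auto simp: card_gt_0_iff)
  have sum0: "(\<Sum>u\<in>A. F u - m) = 0"
    using card_mult_avg[of A F] unfolding m_def by (simp add: sum_subtractf)
  obtain z where z: "z \<in> A" "m < F z"
  proof (rule ccontr)
    assume "\<not> thesis"
    then have "\<forall>u\<in>A. 0 \<le> m - F u" using that by force
    then have "\<forall>u\<in>A. m - F u = 0"
      using sum_nonneg_eq_0_iff[OF fin, of "\<lambda>u. m - F u"] sum0 by (simp add: sum_subtractf)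
    then have "m - F x = 0" "m - F y = 0" using x y by blast+
    then show False using ne by simp
  qed
  have "0 \<le> m" unfolding m_def by (rule avg_nonneg[OF F0])
  then have "0 < F z" using z by linarith
  then have mpos: "0 < m" unfolding m_def using avg_pos[of A F z] fin F0 z(1) by blast
  have "(\<Sum>u\<in>A. F u - m) < (\<Sum>u\<in>A. F u * ln (F u / m))"
  proof (rule sum_strict_mono_ex1[OF fin])
    show "\<forall>u\<in>A. F u - m \<le> F u * ln (F u / m)" using mult_ln_div_ge[OF F0 mpos] by blast
    show "\<exists>u\<in>A. F u - m < F u * ln (F u / m)"
      using mult_ln_div_gt[of "F z" m] z mpos by auto
  qed
  then show ?thesis unfolding ent_def m_def[symmetric] sum0 using cA by simp
qed

lemma ent_avg_le_avg_ent:
  fixes H :: "'a \<Rightarrow> 'b \<Rightarrow> real"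
  assumes finY: "finite Y" and finU: "finite U" and Une: "U \<noteq> {}"
    and H0: "\<And>y u. y \<in> Y \<Longrightarrow> u \<in> U \<Longrightarrow> 0 \<le> H y u"
  shows "ent Y (\<lambda>y. avg U (H y)) \<le> avg U (\<lambda>u. ent Y (\<lambda>y. H y u))"
proof (cases "Y = {}")
  case True then show ?thesis by (simp add: ent_def avg_def)
next
  case False
  have cY: "0 < real (card Y)" using False finY by (simp add: card_gt_0_iff)
  have cU: "0 < real (card U)" using Une finU by (simp add: card_gt_0_iff)
  define G where "G y = avg U (H y)" for y
  define mu where "mu u = avg Y (\<lambda>y. H y u)" for u
  have Gbar: "avg Y G = avg U mu"
    unfolding G_def mu_def avg_def
    by (simp add: sum_divide_distrib[symmetric] sum.swap[of _ Y U])
  have mu0: "0 \<le> mu u" if "u \<in> U" for u unfolding mu_def using H0 that by (simp add: avg_nonneg)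
  have mupos: "0 < mu u" if "y \<in> Y" "u \<in> U" "0 < H y u" for y u
    unfolding mu_def using avg_pos[of Y "\<lambda>y. H y u" y] finY H0 that by blast
  have pw: "real (card U) * (G y * ln (G y / avg Y G)) \<le> (\<Sum>u\<in>U. H y u * ln (H y u / mu u))"
    if y: "y \<in> Y" for y
  proof -
    have "(\<Sum>u\<in>U. H y u) * ln ((\<Sum>u\<in>U. H y u) / (\<Sum>u\<in>U. mu u)) \<le> (\<Sum>u\<in>U. H y u * ln (H y u / mu u))"
      by (rule log_sum_inequality[OF finU]) (use H0 y mu0 mupos in auto)
    moreover have "(\<Sum>u\<in>U. H y u) = real (card U) * G y" unfolding G_def card_mult_avg ..
    moreover have "(\<Sum>u\<in>U. mu u) = real (card U) * avg Y G" unfolding Gbar card_mult_avg ..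
    ultimately show ?thesis using cU by simp
  qed
  have "real (card U) * (real (card Y) * ent Y G) \<le> (\<Sum>y\<in>Y. \<Sum>u\<in>U. H y u * ln (H y u / mu u))"
    unfolding card_mult_ent sum_distrib_left by (rule sum_mono) (use pw in auto)
  also have "\<dots> = real (card Y) * (\<Sum>u\<in>U. ent Y (\<lambda>y. H y u))"
    unfolding sum.swap[of _ Y U] sum_distrib_left card_mult_ent mu_def ..
  also have "\<dots> = real (card Y) * (real (card U) * avg U (\<lambda>u. ent Y (\<lambda>y. H y u)))"
    unfolding card_mult_avg ..
  finally show ?thesis unfolding G_def using cU cY by simp
qed

lemma ent_product_le:
  fixes H :: "'a \<Rightarrow> 'b \<Rightarrow> real"
  assumes finY: "finite Y" and finU: "finite U" and Yne: "Y \<noteq> {}" and Une: "U \<noteq> {}"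
    and H0: "\<And>y u. y \<in> Y \<Longrightarrow> u \<in> U \<Longrightarrow> 0 \<le> H y u"
  shows "ent (Y \<times> U) (\<lambda>(y,u). H y u) \<le> avg U (\<lambda>u. ent Y (\<lambda>y. H y u)) + avg Y (\<lambda>y. ent U (H y))"
proof -
  have cY: "0 < real (card Y)" using Yne finY by (simp add: card_gt_0_iff)
  have cU: "0 < real (card U)" using Une finU by (simp add: card_gt_0_iff)
  define G where "G y = avg U (H y)" for y
  define Hb where "Hb = avg (Y \<times> U) (\<lambda>(y,u). H y u)"
  have HbG: "Hb = avg Y G"
    unfolding Hb_def G_def avg_def card_cartesian_product
    by (simp add: sum_divide_distrib[symmetric] sum.cartesian_product[symmetric] mult.commute)
  have G0: "\<And>y. y \<in> Y \<Longrightarrow> 0 \<le> G y" unfolding G_def by (rule avg_nonneg) (use H0 in auto)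
  have Gpos: "0 < G y" if "y \<in> Y" "u \<in> U" "0 < H y u" for y u
    unfolding G_def using avg_pos[of U "H y" u] finU H0 that by blast
  have Hbpos: "0 < Hb" if "y \<in> Y" "u \<in> U" "0 < H y u" for y u
    unfolding HbG using avg_pos[of Y G y] finY G0 Gpos that by blast
  have "real (card Y) * real (card U) * ent (Y \<times> U) (\<lambda>(y,u). H y u)
      = (\<Sum>y\<in>Y. \<Sum>u\<in>U. H y u * ln (H y u / Hb))"
    using card_mult_ent[of "Y \<times> U" "\<lambda>(y,u). H y u"]
    unfolding Hb_def card_cartesian_product by (simp add: sum.cartesian_product case_prod_beta')
  also have "\<dots> = (\<Sum>y\<in>Y. (\<Sum>u\<in>U. H y u * ln (H y u / G y)) + (\<Sum>u\<in>U. H y u) * ln (G y / Hb))"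
    by (intro sum.cong refl)
      (auto simp: sum_distrib_right sum.distrib[symmetric] H0 Gpos Hbpos intro!: sum.cong mult_ln_div_split)
  also have "\<dots> = (\<Sum>y\<in>Y. real (card U) * ent U (H y) + real (card U) * (G y * ln (G y / Hb)))"
    by (intro sum.cong refl) (simp only: card_mult_ent G_def card_mult_avg[symmetric] mult.assoc)
  also have "\<dots> = real (card U) * (\<Sum>y\<in>Y. ent U (H y)) + real (card U) * (real (card Y) * ent Y G)"
    unfolding HbG card_mult_ent[of Y G] by (simp add: sum.distrib sum_distrib_left)
  also have "\<dots> = real (card U) * (real (card Y) * (avg Y (\<lambda>y. ent U (H y)) + ent Y G))"
    unfolding distrib_left card_mult_avg by (simp add: algebra_simps)
  finally have "ent (Y \<times> U) (\<lambda>(y,u). H y u) = avg Y (\<lambda>y. ent U (H y)) + ent Y G"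
    using cY cU by (simp add: mult.assoc)
  moreover have "ent Y G \<le> avg U (\<lambda>u. ent Y (\<lambda>y. H y u))"
    unfolding G_def by (rule ent_avg_le_avg_ent[OF finY finU Une H0])
  ultimately show ?thesis by simp
qed

lemma ent_split:
  assumes finX: "finite X" and A: "A \<subseteq> X" and F0: "\<And>x. x \<in> X \<Longrightarrow> 0 \<le> F x"
  shows "real (card X) * ent X F = real (card A) * ent A F + real (card (X - A)) * ent (X - A) F
     + (\<Sum>x\<in>A. F x) * ln (avg A F / avg X F) + (\<Sum>x\<in>X - A. F x) * ln (avg (X - A) F / avg X F)"
proof -
  have part: "(\<Sum>x\<in>S. F x * ln (F x / avg X F))
      = real (card S) * ent S F + (\<Sum>x\<in>S. F x) * ln (avg S F / avg X F)" if S: "S \<subseteq> X" for S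
  proof -
    have finS: "finite S" using S finX by (rule finite_subset)
    have "F x * ln (F x / avg X F) = F x * ln (F x / avg S F) + F x * ln (avg S F / avg X F)"
      if x: "x \<in> S" for x
      by (rule mult_ln_div_split)
        (use x S F0 avg_pos[of S F x] avg_pos[of X F x] finS finX in auto)
    then show ?thesis unfolding card_mult_ent by (simp add: sum.distrib sum_distrib_right)
  qed
  have "real (card X) * ent X F
      = (\<Sum>x\<in>X - A. F x * ln (F x / avg X F)) + (\<Sum>x\<in>A. F x * ln (F x / avg X F))"
    unfolding card_mult_ent using sum.subset_diff[OF A finX] by simp
  then show ?thesis using part[OF A] part[of "X - A"] by simp
qed

text \<open>Restricting to a subset can only lose total entropy: the two cross terms of the
  decomposition combine, by the log-sum inequality, to something nonnegative.\<close>

lemma ent_subset_le: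
  assumes finX: "finite X" and A: "A \<subseteq> X" and F0: "\<And>x. x \<in> X \<Longrightarrow> 0 \<le> F x"
  shows "real (card A) * ent A F \<le> real (card X) * ent X F"
proof -
  define m where "m = avg X F"
  define S where "S B = (\<Sum>x\<in>B. F x)" for B
  have finA: "finite A" using A finX by (rule finite_subset)
  have m0: "0 \<le> m" unfolding m_def by (rule avg_nonneg) (use F0 in auto)
  have cross: "S B * ln (avg B F / m) = S B * ln (S B / (real (card B) * m))" for B
    unfolding S_def avg_def by (cases "card B = 0") auto
  have pos: "0 < real (card B) * m" if B: "B \<subseteq> X" and SB: "0 < S B" for B
  proof -
    have "finite B" "B \<noteq> {}" using B SB finX unfolding S_def by (auto intro: finite_subset)
    moreover have "S B \<le> real (card X) * m"
      unfolding m_def card_mult_avg S_def by (rule sum_mono2[OF finX B]) (use F0 in auto)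
    ultimately show ?thesis using SB m0 by (auto simp: card_gt_0_iff zero_less_mult_iff)
  qed
  have SX: "S A + S (X - A) = real (card X) * m"
    unfolding S_def m_def card_mult_avg using sum.subset_diff[OF A finX, of F] by simp
  have cardX: "real (card A) * m + real (card (X - A)) * m = real (card X) * m"
    using card_Diff_subset[OF finA A] card_mono[OF finX A] by (simp add: algebra_simps of_nat_diff)
  have "(S A + S (X - A)) * ln ((S A + S (X - A)) / (real (card A) * m + real (card (X - A)) * m))
      \<le> S A * ln (avg A F / m) + S (X - A) * ln (avg (X - A) F / m)"
    unfolding cross by (rule log_sum_inequality_two)
      (use F0 A m0 pos[OF A] pos[of "X - A"] in \<open>auto simp: S_def intro!: sum_nonneg\<close>)
  then have "0 \<le> S A * ln (avg A F / m) + S (X - A) * ln (avg (X - A) F / m)"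
    unfolding cardX SX by (cases "real (card X) * m = 0") auto
  moreover have "0 \<le> real (card (X - A)) * ent (X - A) F"
    using ent_nonneg[of "X - A" F] F0 finX by simp
  ultimately show ?thesis using ent_split[where F=F, OF finX A F0] unfolding m_def S_def by linarith
qed

lemma var_eq:
  assumes "finite Q" "Q \<noteq> {}"
  shows "var Q g = avg Q (\<lambda>x. (g x)^2) - (avg Q g)^2"
proof -
  have n: "0 < real (card Q)" using assms by (simp add: card_gt_0_iff)
  have "(\<Sum>y\<in>Q. \<Sum>z\<in>Q. (g y - g z)^2) = (\<Sum>y\<in>Q. \<Sum>z\<in>Q. (g y)^2 + (g z)^2 - 2 * g y * g z)"
    by (simp add: power2_diff)
  also have "\<dots> = (\<Sum>y\<in>Q. \<Sum>z\<in>Q. (g y)^2) + (\<Sum>y\<in>Q. \<Sum>z\<in>Q. (g z)^2) - 2 * (\<Sum>y\<in>Q. \<Sum>z\<in>Q. g y * g z)"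
    by (simp add: sum.distrib sum_subtractf sum_distrib_left mult.assoc)
  also have "(\<Sum>y\<in>Q. \<Sum>z\<in>Q. (g y)^2) = real (card Q) * (\<Sum>y\<in>Q. (g y)^2)"
    by (simp add: sum_distrib_left mult.commute)
  also have "(\<Sum>y\<in>Q. \<Sum>z\<in>Q. (g z)^2) = real (card Q) * (\<Sum>y\<in>Q. (g y)^2)"
    by simp
  also have "(\<Sum>y\<in>Q. \<Sum>z\<in>Q. g y * g z) = (\<Sum>y\<in>Q. g y)^2"
    by (simp add: power2_eq_square sum_product)
  finally show ?thesis unfolding var_def avg_def using n
    by (simp add: field_simps power2_eq_square)
qed

lemma var_nonneg: "0 \<le> var Q g"
  unfolding var_def by (simp add: sum_nonneg)

lemma var_doubleton: "x \<noteq> x' \<Longrightarrow> var {x, x'} g = (g x - g x')^2 / 4"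
  unfolding var_def by (simp add: power2_commute)

lemma sum_avg_blocks:
  assumes finA: "finite A" and self: "\<And>x. x \<in> A \<Longrightarrow> x \<in> Q x" and sub: "\<And>x. x \<in> A \<Longrightarrow> Q x \<subseteq> A"
    and eq: "\<And>x y. x \<in> A \<Longrightarrow> y \<in> Q x \<Longrightarrow> Q y = Q x"
  shows "(\<Sum>x\<in>A. (\<Sum>y\<in>Q x. h y) / real (card (Q x))) = (\<Sum>x\<in>A. h x)"
proof -
  have finQ: "finite (Q x)" if "x \<in> A" for x using sub[OF that] finA by (rule finite_subset)
  have block: "{x\<in>A. y \<in> Q x} = Q y" if y: "y \<in> A" for y
    using eq self sub[OF y] self[OF y] by (auto dest: eq[OF y])
  have "(\<Sum>x\<in>A. (\<Sum>y\<in>Q x. h y) / real (card (Q x)))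
      = (\<Sum>x\<in>A. \<Sum>y\<in>A. if y \<in> Q x then h y / real (card (Q y)) else 0)"
  proof (rule sum.cong[OF refl])
    fix x assume x: "x \<in> A"
    have "(\<Sum>y\<in>Q x. h y) / real (card (Q x)) = (\<Sum>y\<in>Q x. h y / real (card (Q y)))"
      by (simp add: sum_divide_distrib eq[OF x] cong: sum.cong)
    also have "\<dots> = (\<Sum>y\<in>A. if y \<in> Q x then h y / real (card (Q y)) else 0)"
      using sum.inter_restrict[OF finA, of "\<lambda>y. h y / real (card (Q y))" "Q x"] sub[OF x]
      by (simp add: Int_absorb1 Int_commute)
    finally show "(\<Sum>y\<in>Q x. h y) / real (card (Q x)) = \<dots>" .
  qed
  also have "\<dots> = (\<Sum>y\<in>A. \<Sum>x\<in>A. if y \<in> Q x then h y / real (card (Q y)) else 0)"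
    by (rule sum.swap)
  also have "\<dots> = (\<Sum>y\<in>A. h y)"
  proof (rule sum.cong[OF refl])
    fix y assume y: "y \<in> A"
    have "0 < card (Q y)" using finQ[OF y] self[OF y] by (auto simp: card_gt_0_iff)
    then show "(\<Sum>x\<in>A. if y \<in> Q x then h y / real (card (Q y)) else 0) = h y"
      using sum.inter_filter[OF finA, of "\<lambda>x. h y / real (card (Q y))" "\<lambda>x. y \<in> Q x"]
      by (simp add: block[OF y])
  qed
  finally show ?thesis .
qed

lemma avg_avg_blocks:
  assumes "finite A" "\<And>x. x \<in> A \<Longrightarrow> x \<in> Q x" "\<And>x. x \<in> A \<Longrightarrow> Q x \<subseteq> A"
    "\<And>x y. x \<in> A \<Longrightarrow> y \<in> Q x \<Longrightarrow> Q y = Q x"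
  shows "avg A (\<lambda>x. avg (Q x) h) = avg A h"
  unfolding avg_def[of A] unfolding avg_def using sum_avg_blocks[OF assms, of h] by simp

lemma sum_mult_card_fibres:
  assumes "finite A" "finite T" "\<And>a. a \<in> A \<Longrightarrow> \<phi> a \<in> T"
  shows "(\<Sum>y\<in>T. h y * real (card {a \<in> A. \<phi> a = y})) = (\<Sum>a\<in>A. h (\<phi> a))"
proof -
  have "(\<Sum>a\<in>A. h (\<phi> a)) = (\<Sum>y\<in>T. \<Sum>a\<in>{a\<in>A. \<phi> a = y}. h (\<phi> a))"
    by (rule sum.group[symmetric]) (use assms in auto)
  also have "\<dots> = (\<Sum>y\<in>T. h y * real (card {a \<in> A. \<phi> a = y}))"
    by (intro sum.cong refl) (simp add: mult.commute)
  finally show ?thesis by simp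
qed

lemma sum_avg_sq_diff_blocks:
  assumes "finite A" "\<And>x. x \<in> A \<Longrightarrow> x \<in> Q x" "\<And>x. x \<in> A \<Longrightarrow> Q x \<subseteq> A"
    and eq: "\<And>x y. x \<in> A \<Longrightarrow> y \<in> Q x \<Longrightarrow> Q y = Q x"
  shows "(\<Sum>x\<in>A. (\<Sum>y\<in>Q x. (g x - g y)^2) / real (card (Q x))) = (\<Sum>x\<in>A. 2 * var (Q x) g)"
proof -
  define h where "h z = (\<Sum>y\<in>Q z. (g z - g y)^2) / real (card (Q z))" for z
  have "(\<Sum>z\<in>Q x. h z) / real (card (Q x)) = 2 * var (Q x) g" if "x \<in> A" for x
  proof -
    have "(\<Sum>z\<in>Q x. h z) = (\<Sum>z\<in>Q x. \<Sum>y\<in>Q x. (g z - g y)^2) / real (card (Q x))"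
      unfolding h_def sum_divide_distrib using eq[OF that] by simp
    then show ?thesis unfolding var_def by (simp add: power2_eq_square field_simps)
  qed
  then show ?thesis using sum_avg_blocks[OF assms, of h] unfolding h_def by simp
qed

lemma entropy_uniform_on: "entropy V (uniform_on V) f = ent V f"
proof -
  have "(\<Sum>y\<in>V. uniform_on V y * f y) = avg V f"
    unfolding uniform_on_def avg_def by (simp add: sum_divide_distrib)
  then show ?thesis unfolding entropy_def ent_def uniform_on_def by (simp add: sum_divide_distrib)
qed

lemma log_sobolev_ge:
  assumes finV: "finite V" and two: "2 \<le> card V" and K: "0 < K"
    and ent_le: "\<And>f. (\<And>x. x \<in> V \<Longrightarrow> 0 \<le> f x) \<Longrightarrow> 0 < avg V f \<Longrightarrow>
      ent V f \<le> K * dirichlet_form V (uniform_on V) P (\<lambda>x. sqrt (f x))"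
  shows "1 / K \<le> log_sobolev V (uniform_on V) P"
  unfolding log_sobolev_def
proof (rule cInf_greatest)
  obtain x y where xy: "x \<in> V" "y \<in> V" "x \<noteq> y"
    using two finV card_le_Suc0_iff_eq[OF finV] by (metis One_nat_def not_less_eq_eq numeral_2_eq_2)
  then show "{dirichlet_form V (uniform_on V) P (\<lambda>x. sqrt (f x)) / entropy V (uniform_on V) f |f.
      (\<forall>x\<in>V. 0 \<le> f x) \<and> (\<exists>x\<in>V. \<exists>y\<in>V. f x \<noteq> f y)} \<noteq> {}"
    by (auto intro!: exI[of _ "\<lambda>z. if z = x then 1 else 0"])
next
  fix s assume "s \<in> {dirichlet_form V (uniform_on V) P (\<lambda>x. sqrt (f x)) / entropy V (uniform_on V) f |f.
      (\<forall>x\<in>V. 0 \<le> f x) \<and> (\<exists>x\<in>V. \<exists>y\<in>V. f x \<noteq> f y)}"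
  then obtain f x y where s: "s = dirichlet_form V (uniform_on V) P (\<lambda>x. sqrt (f x)) / ent V f"
    and f0: "\<And>x. x \<in> V \<Longrightarrow> 0 \<le> f x" and xy: "x \<in> V" "y \<in> V" "f x \<noteq> f y"
    unfolding entropy_uniform_on by blast
  have "0 < ent V f" by (rule ent_pos[OF finV f0 xy])
  moreover have "0 < f x \<or> 0 < f y" using f0[OF xy(1)] f0[OF xy(2)] xy(3) by linarith
  then have "0 < avg V f"
    using avg_pos[of V f x, OF finV f0 xy(1)] avg_pos[of V f y, OF finV f0 xy(2)] by blast
  ultimately show "1 / K \<le> s" unfolding s using ent_le[OF f0] K by (simp add: field_simps)
qed

section \<open>Inequalities for \<open>x ln x\<close>\<close>

lemma ln_ge_half_diff_inverse:
  assumes "0 < (u::real)" "u \<le> 1"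
  shows "(u - 1/u)/2 \<le> ln u"
proof -
  define h where "h x = ln x - (x - 1/x)/2" for x :: real
  have "h 1 \<le> h u"
  proof (rule DERIV_nonpos_imp_decreasing_open[of u 1 h])
    fix x assume x: "u < x" "x < 1"
    then have x0: "0 < x" using assms by simp
    have "(h has_real_derivative (1/x - (1 + 1/x^2)/2)) (at x)"
      unfolding h_def using x0
      by (auto intro!: derivative_eq_intros simp: field_simps power2_eq_square)
    moreover have "1/x - (1 + 1/x^2)/2 = - ((x - 1)^2 / (2 * x^2))" using x0
      by (simp add: field_simps power2_eq_square)
    ultimately show "\<exists>y. (h has_real_derivative y) (at x) \<and> y \<le> 0" by auto
  next
    show "continuous_on {u..1} h" unfolding h_def using assms
      by (intro continuous_intros) auto
  qed (use assms in simp)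
  then show ?thesis unfolding h_def by simp
qed

lemma ln_le_quadratic:
  assumes "0 < (u::real)" "u \<le> 1"
  shows "ln u \<le> (u - 1) - (u - 1)^2/2"
proof -
  define h where "h x = (x - 1) - (x - 1)^2/2 - ln x" for x :: real
  have "h 1 \<le> h u"
  proof (rule DERIV_nonpos_imp_decreasing_open[of u 1 h])
    fix x assume x: "u < x" "x < 1"
    then have x0: "0 < x" using assms by simp
    have "(h has_real_derivative (1 - (x - 1) - 1/x)) (at x)"
      unfolding h_def using x0
      by (auto intro!: derivative_eq_intros simp: field_simps power2_eq_square)
    moreover have "1 - (x - 1) - 1/x = - ((x - 1)^2 / x)" using x0
      by (simp add: field_simps power2_eq_square)
    ultimately show "\<exists>y. (h has_real_derivative y) (at x) \<and> y \<le> 0" using x0 by auto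
  next
    show "continuous_on {u..1} h" unfolding h_def using assms
      by (intro continuous_intros) auto
  qed (use assms in simp)
  then show ?thesis unfolding h_def by simp
qed

lemma mult_ln_inverse_le_sqrt:
  assumes "0 < (e::real)"
  shows "e * ln (1/e) \<le> 2 * sqrt e"
proof -
  have "ln (1/e) = 2 * ln (1 / sqrt e)" using assms by (simp add: ln_div ln_sqrt)
  also have "\<dots> \<le> 2 / sqrt e" using ln_le_minus_one[of "1/sqrt e"] assms by simp
  finally have "e * ln (1/e) \<le> e * (2 / sqrt e)" by (rule mult_left_mono) (use assms in simp)
  also have "\<dots> = 2 * (e / sqrt e)" by simp
  also have "\<dots> = 2 * sqrt e" using assms by (simp add: real_div_sqrt)
  finally show ?thesis .
qed

lemma mult_ln_div_le_linear:
  assumes "0 \<le> (a::real)" "0 < b"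
  shows "a * ln (a / b) \<le> a * (a / b - 1)"
  using assms ln_le_minus_one[of "a/b"] by (cases "a = 0") (auto simp: mult_left_mono)

text \<open>The Bregman divergence of \<open>x ln x\<close>; summed over a partition it measures how much
  entropy is lost by replacing a density with its block averages.\<close>

definition bregman :: "real \<Rightarrow> real \<Rightarrow> real" where
  "bregman a c = a * ln (a / c) - a + c"

lemma bregman_nonneg: "0 \<le> a \<Longrightarrow> 0 < c \<Longrightarrow> 0 \<le> bregman a c"
  using mult_ln_div_ge[of a c] unfolding bregman_def by simp

lemma sq_diff_le_bregman_of_ge:
  assumes "c \<le> a" "0 < c"
  shows "(a - c)^2 \<le> 2 * a * bregman a c"
proof -
  have a: "0 < a" using assms by simp
  define u where "u = c / a"
  have u0: "0 < u" "u \<le> 1" unfolding u_def using assms a by auto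
  have "ln (a / c) = - ln u" unfolding u_def using a assms by (simp add: ln_div)
  then have "(1 - u) + (1 - u)^2/2 \<le> ln (a / c)"
    using ln_le_quadratic[OF u0] by (simp add: power2_commute)
  then have "a * ((1 - u) + (1 - u)^2/2) \<le> a * ln (a / c)" using a by (simp add: mult_left_mono)
  moreover have "a * ((1 - u) + (1 - u)^2/2) = (a - c) + (a - c)^2 / (2 * a)"
    unfolding u_def using a by (simp add: field_simps power2_eq_square)
  ultimately have "(a - c)^2 / (2 * a) \<le> bregman a c" unfolding bregman_def by simp
  then show ?thesis using a by (simp add: field_simps)
qed

lemma sq_diff_le_bregman_of_le:
  assumes "0 \<le> a" "a \<le> c" "0 < c"
  shows "(c - a)^2 \<le> 2 * c * bregman a c"
proof (cases "a = 0")
  case False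
  then have a: "0 < a" using assms by simp
  define t where "t = a / c"
  have t0: "0 < t" "t \<le> 1" unfolding t_def using assms a by auto
  have "c * t * ((t - 1/t)/2) \<le> c * t * ln t"
    using ln_ge_half_diff_inverse[OF t0] t0 assms by (simp add: mult_left_mono)
  moreover have "c * t * ((t - 1/t)/2) = (c - a)^2 / (2 * c) + a - c"
    unfolding t_def using assms a by (simp add: field_simps power2_eq_square)
  moreover have "c * t = a" unfolding t_def using assms by simp
  ultimately have "(c - a)^2 / (2 * c) \<le> bregman a c" unfolding bregman_def t_def by simp
  then show ?thesis using assms by (simp add: field_simps)
qed (use assms in \<open>simp add: bregman_def power2_eq_square\<close>)

lemma mixture_ln_le_chi_square:
  fixes e a c :: real
  assumes "0 \<le> e" "e \<le> 1" "0 \<le> a" "0 \<le> c" and m: "0 < (1-e)*a + e*c"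
  shows "(1-e)*a*ln(a/((1-e)*a + e*c)) + e*c*ln(c/((1-e)*a + e*c)) \<le> e*(1-e)*(a-c)^2/((1-e)*a + e*c)"
proof -
  define m where "m = (1-e)*a + e*c"
  have "(1-e)*(a*ln(a/m)) \<le> (1-e)*(a*(a/m - 1))"
    using mult_ln_div_le_linear[of a m] assms m unfolding m_def by (simp add: mult_left_mono)
  moreover have "e*(c*ln(c/m)) \<le> e*(c*(c/m - 1))"
    using mult_ln_div_le_linear[of c m] assms m unfolding m_def by (simp add: mult_left_mono)
  moreover have "(1-e)*(a*(a/m - 1)) + e*(c*(c/m - 1)) = ((1-e)*a^2 + e*c^2 - m*m)/m"
  proof -
    have "m \<noteq> 0" using m unfolding m_def by simp
    then have "(1-e)*(a*(a/m - 1)) + e*(c*(c/m - 1)) = ((1-e)*a^2 + e*c^2)/m - ((1-e)*a + e*c)"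
      by (simp add: field_simps power2_eq_square)
    also have "\<dots> = ((1-e)*a^2 + e*c^2 - m*m)/m"
      unfolding m_def[symmetric] using \<open>m \<noteq> 0\<close> by (simp add: diff_divide_distrib)
    finally show ?thesis .
  qed
  moreover have "(1-e)*a^2 + e*c^2 - m*m = e*(1-e)*(a-c)^2"
    unfolding m_def by (simp add: algebra_simps power2_eq_square)
  ultimately show ?thesis unfolding m_def by (simp add: mult.assoc)
qed

lemma mixture_ln_le_bregman_of_ge_half:
  fixes e a c :: real
  assumes e0: "0 \<le> e" and e1: "e \<le> 1/2" and ca: "c/2 \<le> a" and c0: "0 < c"
  shows "(1-e)*a*ln(a/((1-e)*a + e*c)) + e*c*ln(c/((1-e)*a + e*c)) \<le> 8*e*bregman a c"
proof -
  define m where "m = (1-e)*a + e*c"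
  define M where "M = max a c"
  have b0: "0 \<le> bregman a c" using bregman_nonneg[of a c] ca c0 by simp
  have "e*a \<le> 1/2*a" using ca c0 by (intro mult_right_mono[OF e1]) auto
  then have "a/2 \<le> (1-e)*a" by (simp add: algebra_simps)
  moreover have "0 \<le> e*c" using e0 c0 by simp
  moreover have "M \<le> 2*a" unfolding M_def using ca c0 by simp
  ultimately have mM: "M/4 \<le> m" unfolding m_def by linarith
  have M0: "0 < M" unfolding M_def using c0 by simp
  have sq: "(a-c)^2 \<le> 2*M*bregman a c"
  proof (cases "c \<le> a")
    case True then show ?thesis using sq_diff_le_bregman_of_ge[of c a] c0 unfolding M_def by simp
  next
    case False then show ?thesis
      using sq_diff_le_bregman_of_le[of a c] ca c0 unfolding M_def by (simp add: power2_commute)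
  qed
  have "(1-e)*a*ln(a/m) + e*c*ln(c/m) \<le> e*(1-e)*(a-c)^2/m"
    unfolding m_def by (rule mixture_ln_le_chi_square) (use e0 e1 ca c0 mM M0 in \<open>auto simp: m_def\<close>)
  also have "\<dots> \<le> e*(1-e)*(2*M*bregman a c)/m"
    using mM M0 e0 e1 by (intro divide_right_mono mult_left_mono[OF sq]) auto
  also have "\<dots> \<le> e*(1-e)*(2*M*bregman a c)/(M/4)"
    using mM M0 e0 e1 b0 by (intro divide_left_mono) auto
  also have "\<dots> = 8*e*bregman a c - 8*(e*e*bregman a c)" using M0 by (simp add: field_simps)
  also have "\<dots> \<le> 8*e*bregman a c" using e0 b0 by simp
  finally show ?thesis unfolding m_def .
qed

lemma mixture_ln_le_bregman_of_lt_half: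
  fixes e a c :: real
  assumes e0: "0 \<le> e" and e1: "e \<le> 1" and a0: "0 \<le> a" and ac: "a < c/2"
  shows "(1-e)*a*ln(a/((1-e)*a + e*c)) + e*c*ln(c/((1-e)*a + e*c)) \<le> 16*sqrt e*bregman a c"
proof -
  define m where "m = (1-e)*a + e*c"
  have c0: "0 < c" using a0 ac by simp
  have "e*a \<le> e*c" using ac a0 e0 by (intro mult_left_mono) auto
  then have "a \<le> m" unfolding m_def by (simp add: algebra_simps)
  then have first: "(1-e)*a*ln(a/m) \<le> 0"
    using e1 a0 by (cases "a = 0") (auto intro!: mult_nonneg_nonpos)
  have second: "e*c*ln(c/m) \<le> 2*sqrt e*c"
  proof (cases "e = 0")
    case False
    then have ep: "0 < e" using e0 by simp
    have ecm: "e*c \<le> m" unfolding m_def using a0 e1 by simp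
    have "0 < e*c" using ep c0 by simp
    have "c/m \<le> c/(e*c)" by (rule divide_left_mono[OF ecm]) (use c0 \<open>0 < e*c\<close> ecm in auto)
    also have "\<dots> = 1/e" using c0 by simp
    finally have "c/m \<le> 1/e" .
    moreover have "0 < m" using ecm \<open>0 < e*c\<close> by linarith
    ultimately have "ln (c/m) \<le> ln (1/e)" using c0 ep by (subst ln_le_cancel_iff) auto
    then have "e*c*ln(c/m) \<le> c*(e*ln(1/e))" using ep c0 by (simp add: algebra_simps)
    also have "\<dots> \<le> c*(2*sqrt e)" using mult_ln_inverse_le_sqrt[OF ep] c0 by simp
    finally show ?thesis by (simp add: algebra_simps)
  qed simp
  have "(c/2)^2 \<le> (c-a)^2" using ac a0 by (intro power_mono) auto
  then have "(c/2)^2 \<le> 2*c*bregman a c" using sq_diff_le_bregman_of_le[of a c] a0 ac by linarith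
  moreover have "(c/2)^2 = 2*c*(c/8)" by (simp add: power2_eq_square)
  ultimately have "c/8 \<le> bregman a c" using c0 by simp
  then have "2*sqrt e*c \<le> 16*sqrt e*bregman a c"
    using mult_left_mono[of "c/8" "bregman a c" "16*sqrt e"] e0 by simp
  then show ?thesis using first second unfolding m_def by linarith
qed

lemma mixture_ln_le_bregman:
  fixes e a c :: real
  assumes e0: "0 \<le> e" and e1: "e \<le> 1/2" and a0: "0 \<le> a" and c0: "0 < c"
  shows "(1-e)*a*ln(a/((1-e)*a + e*c)) + e*c*ln(c/((1-e)*a + e*c)) \<le> 16*sqrt e*bregman a c"
proof (cases "c/2 \<le> a")
  case True
  have "sqrt e * sqrt e \<le> sqrt e * 1" using e0 e1 by (intro mult_left_mono) auto
  then have "8*e \<le> 16*sqrt e" using e0 by simp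
  then have "8*e*bregman a c \<le> 16*sqrt e*bregman a c"
    using bregman_nonneg[OF a0 c0] by (rule mult_right_mono)
  with mixture_ln_le_bregman_of_ge_half[OF e0 e1 True c0] show ?thesis by linarith
qed (use mixture_ln_le_bregman_of_lt_half[of e a c] assms in auto)

lemma weighted_mixture_ln_le_bregman:
  fixes \<alpha> \<beta> a c :: real
  assumes al: "0 < \<alpha>" and be: "0 \<le> \<beta>" "\<beta> \<le> \<alpha>" and a0: "0 \<le> a" and c0: "0 < c"
  defines "m \<equiv> (\<alpha>*a + \<beta>*c)/(\<alpha> + \<beta>)"
  shows "\<alpha>*a*ln(a/m) + \<beta>*c*ln(c/m) \<le> 32*sqrt(\<beta>/(\<alpha>+\<beta>))*\<alpha>*bregman a c"
proof -
  define e where "e = \<beta>/(\<alpha>+\<beta>)"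
  have s: "0 < \<alpha> + \<beta>" using al be by simp
  have e0: "0 \<le> e" and e1: "e \<le> 1/2" unfolding e_def using s be by (auto simp: field_simps)
  have k1: "(\<alpha>+\<beta>)*(1-e) = \<alpha>" and k2: "(\<alpha>+\<beta>)*e = \<beta>" unfolding e_def using s by (simp_all add: field_simps)
  have "(\<alpha>+\<beta>)*((1-e)*a + e*c) = ((\<alpha>+\<beta>)*(1-e))*a + ((\<alpha>+\<beta>)*e)*c"
    by (simp add: algebra_simps)
  then have "m = ((\<alpha>+\<beta>)*((1-e)*a + e*c))/(\<alpha>+\<beta>)" unfolding m_def k1 k2 by simp
  then have m: "m = (1-e)*a + e*c" using s by simp
  have "(\<alpha>+\<beta>) * ((1-e)*a*ln(a/m) + e*c*ln(c/m)) = ((\<alpha>+\<beta>)*(1-e))*a*ln(a/m) + ((\<alpha>+\<beta>)*e)*c*ln(c/m)"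
    by (simp add: algebra_simps)
  then have "\<alpha>*a*ln(a/m) + \<beta>*c*ln(c/m) = (\<alpha>+\<beta>) * ((1-e)*a*ln(a/m) + e*c*ln(c/m))"
    unfolding k1 k2 by simp
  also have "\<dots> \<le> (\<alpha>+\<beta>) * (16*sqrt e*bregman a c)"
    unfolding m using mixture_ln_le_bregman[OF e0 e1 a0 c0] s by (simp add: mult_left_mono)
  also have "\<dots> \<le> (2*\<alpha>) * (16*sqrt e*bregman a c)"
    using be e0 bregman_nonneg[OF a0 c0] by (intro mult_right_mono) auto
  finally show ?thesis unfolding e_def by (simp add: algebra_simps)
qed

lemma sq_ln_sq_le:
  fixes t T :: real
  assumes t0: "0 \<le> t" and tT: "t \<le> T" and T1: "1 \<le> T"
  shows "t^2 * ln (t^2) - t^2 + 1 \<le> (3 + 2 * ln T) * (t - 1)^2"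
proof -
  have lT: "0 \<le> ln T" using T1 by simp
  consider "t = 0" | "0 < t" "t \<le> 1" | "1 < t" using t0 by linarith
  then show ?thesis
  proof cases
    case 1 then show ?thesis using lT by simp
  next
    case 2
    have "t^2 * ln (t^2) = 2 * t^2 * ln t" using 2 by (simp add: ln_realpow)
    also have "\<dots> \<le> 2 * t^2 * (t - 1)" using ln_le_minus_one[of t] 2 by (simp add: mult_left_mono)
    finally have "t^2 * ln (t^2) - t^2 + 1 \<le> (t - 1)^2 * (2*t + 1)"
      by (simp add: algebra_simps power2_eq_square power3_eq_cube)
    also have "\<dots> \<le> (t - 1)^2 * 3" using 2 by (intro mult_left_mono) auto
    also have "\<dots> \<le> (3 + 2 * ln T) * (t - 1)^2"
      using mult_right_mono[of 3 "3 + 2 * ln T" "(t - 1)^2"] lT by (simp add: mult.commute)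
    finally show ?thesis .
  next
    case 3
    then have tp: "0 < t" by simp
    have "(1/t - t)/2 \<le> ln (1/t)" using ln_ge_half_diff_inverse[of "1/t"] 3 by simp
    then have A: "2 * t * ln t \<le> t^2 - 1" using tp by (simp add: ln_div field_simps power2_eq_square)
    have lt: "ln t \<le> ln T" using tp tT by simp
    have B: "t * ln t \<le> (t - 1) * (1 + ln t)" using ln_le_minus_one[OF tp] by (simp add: algebra_simps)
    have "t^2 * ln (t^2) - t^2 + 1 = 2 * (t^2 - t) * ln t + (2 * t * ln t - t^2 + 1)"
      using tp by (simp add: ln_realpow algebra_simps)
    also have "\<dots> \<le> 2 * (t - 1) * (t * ln t)" using A by (simp add: algebra_simps power2_eq_square)
    also have "\<dots> \<le> 2 * (t - 1) * ((t - 1) * (1 + ln t))" using B 3 by (intro mult_left_mono) auto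
    also have "\<dots> = (2 + 2 * ln t) * (t - 1)^2" by (simp add: algebra_simps power2_eq_square)
    also have "\<dots> \<le> (3 + 2 * ln T) * (t - 1)^2" using lt by (intro mult_right_mono) auto
    finally show ?thesis .
  qed
qed

lemma mult_ln_div_deviation_le:
  fixes v s N :: real
  assumes v0: "0 \<le> v" and vN: "v \<le> N * s" and s0: "0 < s" and N1: "1 \<le> N"
  shows "v * ln (v / s) - v + s \<le> (3 + ln N) * (sqrt v - sqrt s)^2"
proof -
  define t where "t = sqrt v / sqrt s"
  have t0: "0 \<le> t" unfolding t_def using v0 s0 by simp
  have t2: "t^2 = v / s" unfolding t_def using v0 s0 by (simp add: power_divide)
  have "t^2 \<le> N" unfolding t2 using vN s0 by (simp add: field_simps)
  then have "t \<le> sqrt N" using t0 by (simp add: real_le_rsqrt)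
  then have "t^2 * ln (t^2) - t^2 + 1 \<le> (3 + 2 * ln (sqrt N)) * (t - 1)^2"
    using sq_ln_sq_le[OF t0] N1 by simp
  also have "2 * ln (sqrt N) = ln N" using N1 by (simp add: ln_sqrt)
  finally have ineq: "t^2 * ln (t^2) - t^2 + 1 \<le> (3 + ln N) * (t - 1)^2" .
  have "v * ln (v / s) - v + s = s * (t^2 * ln (t^2) - t^2 + 1)"
    unfolding t2 using s0 by (simp add: field_simps)
  also have "\<dots> \<le> s * ((3 + ln N) * (t - 1)^2)" using ineq s0 by (simp add: mult_left_mono)
  also have "\<dots> = (3 + ln N) * (s * (t - 1)^2)" by (simp add: algebra_simps)
  also have "s * (t - 1)^2 = (sqrt v - sqrt s)^2"
    unfolding t_def using s0 by (simp add: field_simps power2_eq_square)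
  finally show ?thesis .
qed

lemma sum_sq_sqrt_diff_le_var:
  assumes finQ: "finite Q" and Qne: "Q \<noteq> {}" and f0: "\<And>x. x \<in> Q \<Longrightarrow> 0 \<le> f x"
  shows "(\<Sum>x\<in>Q. (sqrt (f x) - sqrt (avg Q f))^2) \<le> 2 * real (card Q) * var Q (\<lambda>x. sqrt (f x))"
proof -
  define N where "N = real (card Q)"
  define s where "s = avg Q f"
  define g where "g x = sqrt (f x)" for x
  define \<mu> where "\<mu> = avg Q g"
  have s0: "0 \<le> s" unfolding s_def by (rule avg_nonneg) (use f0 in auto)
  have gsq: "(g x)^2 = f x" if "x \<in> Q" for x unfolding g_def using f0[OF that] by simp
  have V: "var Q g = s - \<mu>^2"
    unfolding var_eq[OF finQ Qne] \<mu>_def s_def by (simp add: gsq cong: avg_cong)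
  have "(\<Sum>x\<in>Q. (g x - sqrt s)^2) = (\<Sum>x\<in>Q. f x - 2 * sqrt s * g x + s)"
    using s0 by (intro sum.cong refl) (simp add: power2_diff gsq algebra_simps)
  also have "\<dots> = (\<Sum>x\<in>Q. f x) - 2 * sqrt s * (\<Sum>x\<in>Q. g x) + N * s"
    unfolding N_def by (simp add: sum.distrib sum_subtractf sum_distrib_left)
  also have "\<dots> = N * (2 * s - 2 * sqrt s * \<mu>)"
    unfolding N_def s_def \<mu>_def card_mult_avg[symmetric] by (simp add: algebra_simps)
  also have "\<dots> \<le> N * (2 * var Q g)"
  proof -
    have \<mu>0: "0 \<le> \<mu>" unfolding \<mu>_def g_def by (rule avg_nonneg) (simp add: f0)
    have "\<mu>^2 \<le> s" using V var_nonneg[of Q g] by simp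
    then have "\<mu> \<le> sqrt s" using \<mu>0 by (simp add: real_le_rsqrt)
    then have "\<mu> * \<mu> \<le> sqrt s * \<mu>" using \<mu>0 by (rule mult_right_mono)
    then show ?thesis unfolding V N_def by (intro mult_left_mono) (auto simp: power2_eq_square)
  qed
  finally show ?thesis unfolding N_def g_def s_def by simp
qed

text \<open>Log-Sobolev inequality for the complete graph on \<open>Q\<close>, with the (non-optimal) constant
  \<open>6 + 2 ln |Q|\<close>.\<close>

lemma ent_le_log_card_var:
  assumes finQ: "finite Q" and Qne: "Q \<noteq> {}" and f0: "\<And>x. x \<in> Q \<Longrightarrow> 0 \<le> f x"
  shows "ent Q f \<le> (6 + 2 * ln (real (card Q))) * var Q (\<lambda>x. sqrt (f x))"
proof -
  define N where "N = real (card Q)"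
  define s where "s = avg Q f"
  have N1: "1 \<le> N" unfolding N_def using finQ Qne by (simp add: card_gt_0_iff Suc_le_eq)
  have s0: "0 \<le> s" unfolding s_def by (rule avg_nonneg) (use f0 in auto)
  have sumf: "(\<Sum>x\<in>Q. f x) = N * s" unfolding s_def N_def card_mult_avg ..
  show ?thesis
  proof (cases "s = 0")
    case True
    then have "\<forall>x\<in>Q. f x = 0" using sumf sum_nonneg_eq_0_iff[OF finQ, of f] f0 by simp
    then show ?thesis using ent_const[of Q f 0] var_nonneg[of Q] N1 unfolding N_def by simp
  next
    case False
    have fle: "f x \<le> N * s" if "x \<in> Q" for x
      unfolding sumf[symmetric] by (rule member_le_sum) (use that f0 finQ in auto)
    have "N * ent Q f = (\<Sum>x\<in>Q. f x * ln (f x / s) - f x + s)"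
      using sumf unfolding N_def s_def card_mult_ent by (simp add: sum.distrib sum_subtractf)
    also have "\<dots> \<le> (\<Sum>x\<in>Q. (3 + ln N) * (sqrt (f x) - sqrt s)^2)"
      by (intro sum_mono mult_ln_div_deviation_le) (use f0 fle s0 False N1 in auto)
    also have "\<dots> \<le> (3 + ln N) * (2 * N * var Q (\<lambda>x. sqrt (f x)))"
      unfolding sum_distrib_left[symmetric] s_def N_def using N1
      by (intro mult_left_mono sum_sq_sqrt_diff_le_var[OF finQ Qne f0]) (auto simp: N_def)
    finally have "N * ent Q f \<le> N * ((6 + 2 * ln N) * var Q (\<lambda>x. sqrt (f x)))"
      by (simp add: algebra_simps)
    then show ?thesis using N1 unfolding N_def by simp
  qed
qed

lemma ent_extend_const_le:
  assumes finX: "finite X" and A: "A \<subseteq> X" and F0: "\<And>x. x \<in> X \<Longrightarrow> 0 \<le> F x"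
    and c0: "0 < c" and Fc: "\<And>x. x \<in> X - A \<Longrightarrow> F x = c"
    and cA: "0 < card A" and cB: "card (X - A) \<le> card A"
  shows "real (card X) * ent X F \<le> real (card A) * ent A F
     + 32 * sqrt (real (card (X - A)) / real (card X)) * real (card A) * bregman (avg A F) c"
proof -
  define \<alpha> where "\<alpha> = real (card A)"
  define \<beta> where "\<beta> = real (card (X - A))"
  define a where "a = avg A F"
  have finA: "finite A" using A finX by (rule finite_subset)
  have XAB: "real (card X) = \<alpha> + \<beta>"
    unfolding \<alpha>_def \<beta>_def using card_Diff_subset[OF finA A] card_mono[OF finX A] by simp
  have a0: "0 \<le> a" unfolding a_def by (rule avg_nonneg) (use F0 A in auto)
  have SA: "(\<Sum>x\<in>A. F x) = \<alpha> * a" unfolding \<alpha>_def a_def card_mult_avg ..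
  have SB: "(\<Sum>x\<in>X - A. F x) = \<beta> * c" unfolding \<beta>_def using Fc by simp
  have entB: "ent (X - A) F = 0" using Fc by (rule ent_const)
  have avgB: "(\<Sum>x\<in>X - A. F x) * ln (avg (X - A) F / avg X F) = \<beta> * c * ln (c / avg X F)"
  proof (cases "X - A = {}")
    case False
    then have "avg (X - A) F = c" unfolding avg_def using Fc finX by (simp add: card_gt_0_iff)
    then show ?thesis unfolding SB by simp
  next
    case True
    then show ?thesis unfolding \<beta>_def True by simp
  qed
  have m: "avg X F = (\<alpha> * a + \<beta> * c) / (\<alpha> + \<beta>)"
    unfolding avg_def sum.subset_diff[OF A finX] SA SB XAB by (simp add: algebra_simps)
  have "\<alpha> * a * ln (a / avg X F) + \<beta> * c * ln (c / avg X F)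
      \<le> 32 * sqrt (\<beta> / (\<alpha> + \<beta>)) * \<alpha> * bregman a c"
    unfolding m by (rule weighted_mixture_ln_le_bregman) (use cA cB a0 c0 in \<open>simp_all add: \<alpha>_def \<beta>_def\<close>)
  then show ?thesis using ent_split[where F=F, OF finX A F0] entB avgB
    unfolding SA XAB \<alpha>_def[symmetric] \<beta>_def[symmetric] a_def[symmetric] by simp
qed

section \<open>Entropy on subcubes of the Boolean cube\<close>

definition subcube :: "(nat \<times> nat) set \<Rightarrow> tuple \<Rightarrow> tuple set" where
  "subcube D x = {y. \<forall>i j. (i, j) \<notin> D \<longrightarrow> y i j = x i j}"

lemma subcube_self [simp]: "x \<in> subcube D x"
  unfolding subcube_def by simp

lemma subcube_eq: "y \<in> subcube D x \<Longrightarrow> subcube D y = subcube D x"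
  unfolding subcube_def by auto

lemma subcube_mono: "D \<subseteq> I \<Longrightarrow> y \<in> subcube I x \<Longrightarrow> subcube D y \<subseteq> subcube I x"
  unfolding subcube_def by blast

lemma subcube_finite_card:
  assumes "finite D"
  shows "finite (subcube D x)" "card (subcube D x) = 2 ^ card D"
proof -
  define mk where "mk T = (\<lambda>i j. if (i, j) \<in> D then (i, j) \<in> T else x i j)" for T
  have "inj_on mk (Pow D)"
  proof (rule inj_onI)
    fix S T assume S: "S \<in> Pow D" and T: "T \<in> Pow D" and eq: "mk S = mk T"
    have "(i, j) \<in> S \<longleftrightarrow> (i, j) \<in> T" for i j
    proof (cases "(i, j) \<in> D")
      case True
      then show ?thesis using fun_cong[OF fun_cong[OF eq, of i], of j] unfolding mk_def by simp
    qed (use S T in auto)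
    then show "S = T" by auto
  qed
  moreover have "mk ` Pow D = subcube D x"
  proof
    show "subcube D x \<subseteq> mk ` Pow D"
    proof
      fix y assume "y \<in> subcube D x"
      then have "y = mk {s \<in> D. y (fst s) (snd s)}" unfolding mk_def subcube_def by (auto intro!: ext)
      then show "y \<in> mk ` Pow D" by blast
    qed
  qed (auto simp: mk_def subcube_def)
  ultimately show "finite (subcube D x)" "card (subcube D x) = 2 ^ card D"
    using assms by (metis finite_Pow_iff finite_imageI, metis card_image card_Pow)
qed

definition merge :: "(nat \<times> nat) set \<Rightarrow> tuple \<Rightarrow> tuple \<Rightarrow> tuple" where
  "merge D y u = (\<lambda>i j. if (i, j) \<in> D then y i j else u i j)"

lemma bij_merge_subcube_union:
  assumes "D \<inter> I = {}"
  shows "bij_betw (\<lambda>(y, u). merge D y u) (subcube D x \<times> subcube I x) (subcube (D \<union> I) x)"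
proof (rule bij_betwI')
  fix p q assume "p \<in> subcube D x \<times> subcube I x" "q \<in> subcube D x \<times> subcube I x"
  then show "((\<lambda>(y, u). merge D y u) p = (\<lambda>(y, u). merge D y u) q) = (p = q)"
    using assms unfolding merge_def subcube_def
    by (cases p, cases q) (auto simp: fun_eq_iff disjoint_iff, metis+)
next
  fix z assume z: "z \<in> subcube (D \<union> I) x"
  show "\<exists>p \<in> subcube D x \<times> subcube I x. z = (\<lambda>(y, u). merge D y u) p"
  proof (intro bexI)
    show "z = (\<lambda>(y, u). merge D y u) (merge D z x, merge D x z)" by (auto simp: merge_def fun_eq_iff)
    show "(merge D z x, merge D x z) \<in> subcube D x \<times> subcube I x"
      using z unfolding merge_def subcube_def by auto
  qed
qed (auto simp: merge_def subcube_def)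

lemma subcube_merge: "subcube D (merge D y u) = subcube D u"
  unfolding subcube_def merge_def by auto

lemma merge_subcube_image: "(\<lambda>y. merge D y u) ` subcube D x = subcube D u"
proof
  show "subcube D u \<subseteq> (\<lambda>y. merge D y u) ` subcube D x"
  proof
    fix z assume "z \<in> subcube D u"
    then have "z = merge D (merge D z x) u" unfolding subcube_def merge_def by auto
    then show "z \<in> (\<lambda>y. merge D y u) ` subcube D x" by (auto simp: subcube_def merge_def)
  qed
qed (auto simp: subcube_def merge_def)

lemma inj_on_merge_subcube: "inj_on (\<lambda>y. merge D y u) (subcube D x)"
proof (rule inj_onI)
  fix a b assume a: "a \<in> subcube D x" and b: "b \<in> subcube D x" and eq: "merge D a u = merge D b u"
  have "a i j = b i j" for i j
    using fun_cong[OF fun_cong[OF eq, of i], of j] a b unfolding merge_def subcube_def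
    by (cases "(i, j) \<in> D") auto
  then show "a = b" by (auto intro!: ext)
qed

lemma merge_comm:
  "D \<inter> I = {} \<Longrightarrow> y \<in> subcube D x \<Longrightarrow> u \<in> subcube I x \<Longrightarrow> merge D y u = merge I u y"
  unfolding subcube_def merge_def by (auto simp: fun_eq_iff disjoint_iff)

lemma ent_subcube_merge:
  "ent (subcube D (merge D y u)) F = ent (subcube D x) (\<lambda>y'. F (merge D y' u))"
  unfolding subcube_merge merge_subcube_image[of D u x, symmetric]
  by (simp add: ent_image[OF inj_on_merge_subcube] comp_def)

lemma ent_subcube_union_le:
  assumes disj: "D \<inter> I = {}" and finD: "finite D" and finI: "finite I" and F0: "\<And>x. 0 \<le> F x"
  shows "ent (subcube (D \<union> I) x) F \<le> avg (subcube (D \<union> I) x) (\<lambda>z. ent (subcube D z) F)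
           + avg (subcube (D \<union> I) x) (\<lambda>z. ent (subcube I z) F)"
proof -
  define Y where "Y = subcube D x"
  define U where "U = subcube I x"
  define \<pi> where "\<pi> = (\<lambda>(y, u). merge D y u)"
  define H where "H y u = F (merge D y u)" for y u
  have finY: "finite Y" and finU: "finite U"
    unfolding Y_def U_def using subcube_finite_card finD finI by auto
  have Yne: "Y \<noteq> {}" and Une: "U \<noteq> {}" unfolding Y_def U_def using subcube_self by blast+
  have "bij_betw \<pi> (Y \<times> U) (subcube (D \<union> I) x)"
    unfolding \<pi>_def Y_def U_def by (rule bij_merge_subcube_union[OF disj])
  then have inj: "inj_on \<pi> (Y \<times> U)" and img: "subcube (D \<union> I) x = \<pi> ` (Y \<times> U)"
    unfolding bij_betw_def by auto
  have sliceD: "ent (subcube D (\<pi> p)) F = ent Y (\<lambda>y. H y (snd p))" for p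
    unfolding \<pi>_def H_def Y_def by (cases p) (simp add: ent_subcube_merge)
  have sliceI: "ent (subcube I (\<pi> p)) F = ent U (H (fst p))" if pYU: "p \<in> Y \<times> U" for p
  proof -
    obtain y u where p: "p = (y, u)" "y \<in> Y" "u \<in> U" using pYU by (cases p) auto
    have "ent (subcube I (\<pi> p)) F = ent U (\<lambda>u'. F (merge I u' y))"
      unfolding p \<pi>_def U_def using merge_comm[OF disj] p(2,3) unfolding Y_def U_def
      by (simp add: ent_subcube_merge)
    also have "\<dots> = ent U (H y)"
      unfolding H_def using merge_comm[OF disj] p(2) unfolding Y_def U_def by (intro ent_cong) simp
    finally show ?thesis using p by simp
  qed
  have "ent (subcube (D \<union> I) x) F = ent (Y \<times> U) (\<lambda>(y,u). H y u)"
    unfolding img ent_image[OF inj] by (simp add: \<pi>_def H_def comp_def case_prod_beta')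
  also have "\<dots> \<le> avg U (\<lambda>u. ent Y (\<lambda>y. H y u)) + avg Y (\<lambda>y. ent U (H y))"
    by (rule ent_product_le[OF finY finU Yne Une]) (simp add: H_def F0)
  also have "avg U (\<lambda>u. ent Y (\<lambda>y. H y u)) = avg (subcube (D \<union> I) x) (\<lambda>z. ent (subcube D z) F)"
    unfolding img avg_image[OF inj] comp_def sliceD
    using avg_product_snd[OF finY Yne finU, of "\<lambda>u. ent Y (\<lambda>y. H y u)"] by simp
  also have "avg Y (\<lambda>y. ent U (H y)) = avg (subcube (D \<union> I) x) (\<lambda>z. ent (subcube I z) F)"
    unfolding img avg_image[OF inj] comp_def avg_product_fst[OF finU Une finY, symmetric]
    by (rule avg_cong) (simp add: sliceI)
  finally show ?thesis .
qed

lemma ent_subcube_tensorisation: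
  fixes D :: "'j \<Rightarrow> (nat \<times> nat) set"
  assumes "finite J" "\<And>j. j \<in> J \<Longrightarrow> finite (D j)"
    "\<And>i j. i \<in> J \<Longrightarrow> j \<in> J \<Longrightarrow> i \<noteq> j \<Longrightarrow> D i \<inter> D j = {}"
    and F0: "\<And>x. 0 \<le> F x"
  shows "ent (subcube (\<Union>j\<in>J. D j) x) F \<le> (\<Sum>j\<in>J. avg (subcube (\<Union>j\<in>J. D j) x) (\<lambda>z. ent (subcube (D j) z) F))"
  using assms(1-3)
proof (induction J arbitrary: x rule: finite_induct)
  case empty
  have "subcube {} x = {x}" unfolding subcube_def by (auto intro!: ext)
  then show ?case by (simp add: ent_def avg_def)
next
  case (insert j J)
  define I where "I = (\<Union>i\<in>J. D i)"
  define A where "A = subcube (D j \<union> I) x"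
  define h where "h i z = ent (subcube (D i) z) F" for i z
  have disj: "D j \<inter> I = {}" unfolding I_def using insert.prems(2)[of j] insert.hyps(2) by blast
  have finD: "finite (D j)" and finI: "finite I" unfolding I_def using insert by auto
  have finA: "finite A" unfolding A_def using subcube_finite_card finD finI by auto
  have IH: "ent (subcube I z) F \<le> (\<Sum>i\<in>J. avg (subcube I z) (h i))" for z
    unfolding I_def h_def by (rule insert.IH) (use insert in auto)
  have "ent A F \<le> avg A (h j) + avg A (\<lambda>z. ent (subcube I z) F)"
    unfolding A_def h_def by (rule ent_subcube_union_le[OF disj finD finI F0])
  also have "avg A (\<lambda>z. ent (subcube I z) F) \<le> avg A (\<lambda>z. \<Sum>i\<in>J. avg (subcube I z) (h i))"
    by (rule avg_mono) (rule IH)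
  also have "\<dots> = (\<Sum>i\<in>J. avg A (h i))"
    unfolding avg_sum
    by (intro sum.cong refl avg_avg_blocks[OF finA])
      (auto simp: A_def subcube_eq intro: subcube_mono[of I "D j \<union> I", THEN subsetD])
  finally show ?case using insert unfolding I_def A_def h_def by simp
qed

section \<open>The generic set\<close>

lemma flip_bit_neq: "flip_bit y r c \<noteq> y"
proof
  assume "flip_bit y r c = y"
  then have "flip_bit y r c r c = y r c" by simp
  then show False unfolding flip_bit_def by simp
qed

lemma kn_pow_le_two_pow_wpar:
  assumes "0 < n" "0 < k"
  shows "(real k * real n)^10 \<le> 2 ^ wpar k n"
proof -
  have kn: "0 < real k * real n" using assms by simp
  have "10 * log 2 (real k * real n) \<le> real (wpar k n)"
    unfolding wpar_def using assms by (simp add: log_mult)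
  then have "2 powr (10 * log 2 (real k * real n)) \<le> 2 powr real (wpar k n)" by simp
  moreover have "(real k * real n)^10 = (2 powr log 2 (real k * real n)) powr 10"
    using kn by (simp add: powr_realpow)
  moreover have "\<dots> = 2 powr (10 * log 2 (real k * real n))" by (simp add: powr_powr mult.commute)
  ultimately show ?thesis by (simp add: powr_realpow)
qed

locale generic_setup =
  fixes n k :: nat and B :: "nat \<Rightarrow> nat set" and C :: "nat set"
  assumes n_pos: "0 < n" and k_pos: "0 < k" and wpar_less: "real (wpar k n) < real n / 2"
    and blocks: "\<forall>t<ppar k n. B t \<subseteq> {..<n} \<and> card (B t) = wpar k n"
    and blocks_disjoint: "\<forall>t<ppar k n. \<forall>t'<ppar k n. t \<noteq> t' \<longrightarrow> B t \<inter> B t' = {}"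
    and C_eq: "C = {..<n} - (\<Union>t<ppar k n. B t)"
begin

abbreviation "w \<equiv> wpar k n"
abbreviation "p \<equiv> ppar k n"
abbreviation "V \<equiv> generic_set k n B"

lemma B_subset: "t < p \<Longrightarrow> B t \<subseteq> {..<n}" and card_B: "t < p \<Longrightarrow> card (B t) = w"
  using blocks by auto

lemma finite_B: "t < p \<Longrightarrow> finite (B t)"
  using B_subset finite_subset by blast

lemma C_subset: "C \<subseteq> {..<n}" and C_disjoint_B: "c \<in> C \<Longrightarrow> t < p \<Longrightarrow> c \<notin> B t"
  using C_eq by auto

lemma finite_C: "finite C"
  using C_subset finite_subset by blast

lemma ppar_less: "real p < real n / (2 * real w) + 1"
proof -
  have "real p = real_of_int \<lceil>real n / (2 * real w)\<rceil>" unfolding ppar_def by simp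
  then show ?thesis by linarith
qed

lemma wpar_ge_10:
  assumes "0 < p"
  shows "10 \<le> w"
proof -
  have "w \<noteq> 0" using assms unfolding ppar_def by (cases "w = 0") auto
  then have "\<not> (k = 1 \<and> n = 1)" unfolding wpar_def by auto
  then have "2 \<le> k \<or> 2 \<le> n" using n_pos k_pos by linarith
  then have "2 \<le> k * n"
    using mult_le_mono[of 2 k 1 n] mult_le_mono[of 1 k 2 n] n_pos k_pos by auto
  then have "(2::real)^10 \<le> (real k * real n)^10" by (intro power_mono) (auto simp flip: of_nat_mult)
  then have "(2::real)^10 \<le> 2 ^ w" using kn_pow_le_two_pow_wpar[OF n_pos k_pos] by linarith
  then show ?thesis by (rule power_le_imp_le_exp[rotated]) simp
qed

lemma n_ge_21: "0 < p \<Longrightarrow> 21 \<le> n"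
  using wpar_ge_10 wpar_less by simp

lemma ppar_le_n: "p \<le> n"
proof (cases "p = 0")
  case False
  then have "real n / (2 * real w) \<le> real n / 20" using wpar_ge_10 by (intro divide_left_mono) auto
  then show ?thesis using ppar_less n_ge_21 False by simp
qed simp

text \<open>This is where \<open>w \<ge> 10 log\<^sub>2 (kn)\<close> enters: \<open>2\<^sup>w\<close> beats every fixed polynomial in \<open>p \<le> n\<close> and \<open>k\<close>.\<close>

lemma ppar_k_sq_le_two_pow_wpar:
  assumes "0 < p"
  shows "(64 * real p * real k)^2 * real k \<le> 2 ^ w"
proof -
  have n21: "21 \<le> real n" using n_ge_21[OF assms] by simp
  have k1: "1 \<le> real k" using k_pos by simp
  have "(21::real)^8 \<le> real n ^ 8" using n21 by (intro power_mono) auto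
  then have "1 * 4096 \<le> real k ^ 7 * real n ^ 8" using k1 by (intro mult_mono) auto
  then have "4096 * (real k ^ 3 * real n ^ 2) \<le> (real k ^ 7 * real n ^ 8) * (real k ^ 3 * real n ^ 2)"
    by (intro mult_right_mono) auto
  also have "\<dots> = (real k * real n)^10" by (simp add: power_mult_distrib algebra_simps flip: power_add)
  also have "\<dots> \<le> 2 ^ w" by (rule kn_pow_le_two_pow_wpar[OF n_pos k_pos])
  finally have base: "4096 * (real k ^ 3 * real n ^ 2) \<le> 2 ^ w" .
  have "(64 * real p * real k)^2 * real k = 4096 * real p ^ 2 * real k ^ 3"
    by (simp add: power2_eq_square power3_eq_cube algebra_simps)
  also have "\<dots> \<le> 4096 * real n ^ 2 * real k ^ 3"
    using ppar_le_n by (intro mult_right_mono mult_left_mono power_mono) auto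
  finally show ?thesis using base by (simp add: mult.commute)
qed

lemma two_ppar_k_sq_le_two_pow_wpar:
  assumes "0 < p"
  shows "2 * real p * real k ^ 2 \<le> 2 ^ w"
proof -
  have "2 * real p * real k ^ 2 \<le> 4096 * (real p * real p) * (real k ^ 2 * real k)"
    using assms k_pos by (intro mult_mono) (auto simp: power2_eq_square)
  also have "\<dots> = (64 * real p * real k)^2 * real k" by (simp add: power2_eq_square algebra_simps)
  finally show ?thesis using ppar_k_sq_le_two_pow_wpar[OF assms] by linarith
qed

lemma wpar_ppar_le:
  assumes "0 < p"
  shows "(12 + 4 * real w) * real p \<le> 16 * real n"
proof -
  have w1: "1 \<le> real w" using wpar_ge_10[OF assms] by simp
  have "(12 + 4 * real w) * real p \<le> (12 + 4 * real w) * (real n / (2 * real w) + 1)"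
    using ppar_less by (intro mult_left_mono) auto
  also have "\<dots> = 6 * real n / real w + 2 * real n + 12 + 4 * real w" using w1 by (simp add: field_simps)
  also have "\<dots> \<le> 16 * real n"
  proof -
    have "6 * real n / real w \<le> 6 * real n / 1" using w1 by (intro divide_left_mono) auto
    then show ?thesis using wpar_less n_ge_21[OF assms] by linarith
  qed
  finally show ?thesis .
qed

definition cells :: "(nat \<times> nat) set" where
  "cells = {..<k} \<times> {..<n}"

definition cube :: "tuple set" where
  "cube = subcube cells (\<lambda>_ _. False)"

text \<open>The coordinates of the product chain: \<open>Inl (l, r)\<close> is the block \<open>C\<^sub>l\<close> of the \<open>r\<close>-th string,
  \<open>Inr (c, r)\<close> the single bit \<open>x\<^sub>r\<^sub>,\<^sub>c\<close> with \<open>c \<in> C\<close>.\<close>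

definition parts :: "((nat \<times> nat) + (nat \<times> nat)) set" where
  "parts = ({..<p} \<times> {..<k}) <+> (C \<times> {..<k})"

fun part :: "((nat \<times> nat) + (nat \<times> nat)) \<Rightarrow> (nat \<times> nat) set" where
  "part (Inl (l, r)) = {r} \<times> B l"
| "part (Inr (c, r)) = {(r, c)}"

lemma mem_cube_iff: "x \<in> cube \<longleftrightarrow> (\<forall>i j. (k \<le> i \<or> n \<le> j) \<longrightarrow> \<not> x i j)"
  unfolding cube_def subcube_def cells_def by auto

lemma mem_V_iff:
  "x \<in> V \<longleftrightarrow> x \<in> cube \<and> (\<forall>i<k. \<forall>i'<k. i \<noteq> i' \<longrightarrow> (\<forall>t<p. \<exists>j\<in>B t. x i j \<noteq> x i' j))"
  unfolding generic_set_def mem_cube_iff by auto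

lemma V_subset_cube: "V \<subseteq> cube"
  using mem_V_iff by auto

lemma card_cube: "card cube = 2 ^ (k * n)" and finite_cube: "finite cube"
  unfolding cube_def using subcube_finite_card[of cells] by (simp_all add: cells_def card_cartesian_product)

lemma finite_V: "finite V"
  using finite_subset[OF V_subset_cube finite_cube] .

lemma finite_parts: "finite parts"
  unfolding parts_def using finite_C by simp

lemma finite_part: "j \<in> parts \<Longrightarrow> finite (part j)"
  unfolding parts_def using finite_B by auto

lemma part_subset_cells: "j \<in> parts \<Longrightarrow> part j \<subseteq> cells"
  unfolding parts_def cells_def using C_subset by (auto dest!: B_subset)

lemma parts_disjoint: "i \<in> parts \<Longrightarrow> j \<in> parts \<Longrightarrow> i \<noteq> j \<Longrightarrow> part i \<inter> part j = {}"
  using blocks_disjoint C_disjoint_B unfolding parts_def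
  by (cases i rule: part.cases; cases j rule: part.cases) auto

lemma Union_parts: "(\<Union>j\<in>parts. part j) = cells"
proof
  show "cells \<subseteq> (\<Union>j\<in>parts. part j)"
  proof
    fix s assume "s \<in> cells"
    then obtain r c where rc: "s = (r, c)" "r < k" "c < n" unfolding cells_def by auto
    show "s \<in> (\<Union>j\<in>parts. part j)"
    proof (cases "c \<in> C")
      case True
      then show ?thesis using rc by (auto simp: parts_def intro!: bexI[of _ "Inr (c, r)"])
    next
      case False
      then obtain l where "l < p" "c \<in> B l" using C_eq rc by auto
      then show ?thesis using rc by (auto simp: parts_def intro!: bexI[of _ "Inl (l, r)"])
    qed
  qed
qed (use part_subset_cells in auto)

lemma finite_subcube_part: "j \<in> parts \<Longrightarrow> finite (subcube (part j) x)"
  using subcube_finite_card finite_part by auto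

text \<open>Resampling block \<open>C\<^sub>l\<close> of string \<open>r\<close> can only create collisions between string \<open>r\<close>
  and another string on that same block.\<close>

lemma subcube_Inl_mem_V_iff:
  assumes l: "l < p" and r: "r < k" and y: "y \<in> V" and z: "z \<in> subcube (part (Inl (l, r))) y"
  shows "z \<in> V \<longleftrightarrow> (\<forall>i<k. i \<noteq> r \<longrightarrow> (\<exists>j\<in>B l. z r j \<noteq> y i j))"
proof -
  have zy: "z i j = y i j" if "i \<noteq> r \<or> j \<notin> B l" for i j using z that unfolding subcube_def by auto
  have y_cube: "y \<in> cube" and y_gen: "\<And>i i' t. i < k \<Longrightarrow> i' < k \<Longrightarrow> i \<noteq> i' \<Longrightarrow> t < p \<Longrightarrow> \<exists>j\<in>B t. y i j \<noteq> y i' j"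
    using y mem_V_iff by auto
  show ?thesis
  proof
    assume "z \<in> V"
    then show "\<forall>i<k. i \<noteq> r \<longrightarrow> (\<exists>j\<in>B l. z r j \<noteq> y i j)"
      using mem_V_iff r l zy by (metis (no_types, lifting))
  next
    assume new: "\<forall>i<k. i \<noteq> r \<longrightarrow> (\<exists>j\<in>B l. z r j \<noteq> y i j)"
    have "z \<in> cube" unfolding mem_cube_iff using y_cube r B_subset[OF l] zy
      unfolding mem_cube_iff by (metis lessThan_iff not_le subsetD)
    moreover have sep: "\<exists>j\<in>B t. z i j \<noteq> z i' j"
      if hyp: "i < k" "i' < k" "i \<noteq> i'" "t < p" "i' \<noteq> r" for i i' t
    proof (cases "t = l \<and> i = r")
      case True then show ?thesis using new hyp zy by auto
    next
      case False
      obtain j where j: "j \<in> B t" "y i j \<noteq> y i' j" using y_gen hyp by blast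
      have "j \<notin> B l \<or> (i \<noteq> r \<and> i' \<noteq> r)" using False blocks_disjoint hyp j(1) l by blast
      then show ?thesis using j zy by metis
    qed
    have "\<forall>i<k. \<forall>i'<k. i \<noteq> i' \<longrightarrow> (\<forall>t<p. \<exists>j\<in>B t. z i j \<noteq> z i' j)"
      using sep sep[of i' i for i i'] by (metis (no_types, lifting))
    ultimately show "z \<in> V" using mem_V_iff by auto
  qed
qed

lemma subcube_Inl_inter_V:
  assumes "l < p" "r < k" "y \<in> V"
  shows "subcube (part (Inl (l, r))) y \<inter> V = repl_set k B y l r"
  using subcube_Inl_mem_V_iff[OF assms] unfolding repl_set_def subcube_def by auto

lemma card_subcube_Inl_diff_V:
  assumes l: "l < p" and r: "r < k" and y: "y \<in> V"
  shows "card (subcube (part (Inl (l, r))) y - V) \<le> k - 1"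
proof -
  define Q where "Q = subcube (part (Inl (l, r))) y"
  define copy where "copy i = {z \<in> Q. \<forall>j\<in>B l. z r j = y i j}" for i
  have finQ: "finite Q" unfolding Q_def using subcube_finite_card finite_B[OF l] by simp
  have cover: "Q - V \<subseteq> (\<Union>i\<in>{..<k} - {r}. copy i)"
  proof
    fix z assume "z \<in> Q - V"
    then obtain i where "i < k" "i \<noteq> r" "\<forall>j\<in>B l. z r j = y i j"
      using subcube_Inl_mem_V_iff[OF l r y] unfolding Q_def by auto
    then show "z \<in> (\<Union>i\<in>{..<k} - {r}. copy i)" using \<open>z \<in> Q - V\<close> unfolding copy_def by blast
  qed
  \<comment> \<open>A point of \<open>Q\<close> is determined by its \<open>r\<close>-th row on \<open>C\<^sub>l\<close>.\<close>
  have one: "card (copy i) \<le> 1" for i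
  proof -
    have "a i' j = b i' j" if "a \<in> copy i" "b \<in> copy i" for a b i' j
      using that unfolding copy_def Q_def subcube_def by (cases "i' = r \<and> j \<in> B l") auto
    then have "\<forall>a\<in>copy i. \<forall>b\<in>copy i. a = b" by (blast intro: ext)
    moreover have "finite (copy i)" using finQ unfolding copy_def by simp
    ultimately show ?thesis by (simp add: card_le_Suc0_iff_eq)
  qed
  have "card (Q - V) \<le> (\<Sum>i\<in>{..<k} - {r}. card (copy i))"
    using finQ cover by (intro order_trans[OF card_mono card_UN_le]) (auto simp: copy_def)
  also have "\<dots> \<le> (\<Sum>i\<in>{..<k} - {r}. 1)" by (rule sum_mono) (rule one)
  finally show ?thesis using r unfolding Q_def by simp
qed

lemma subcube_Inr_subset_V:
  assumes c: "c \<in> C" and r: "r < k" and y: "y \<in> V"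
  shows "subcube (part (Inr (c, r))) y \<subseteq> V"
proof
  fix z assume "z \<in> subcube (part (Inr (c, r))) y"
  then have zy: "z i j = y i j" if "i \<noteq> r \<or> j \<noteq> c" for i j using that unfolding subcube_def by auto
  have "z \<in> cube" using y zy C_subset c r unfolding mem_V_iff mem_cube_iff by (metis lessThan_iff not_le subsetD)
  moreover have "j \<noteq> c" if "j \<in> B t" "t < p" for j t using C_disjoint_B[OF c] that by auto
  ultimately show "z \<in> V" using y zy unfolding mem_V_iff by metis
qed

lemma subcube_Inr: "subcube (part (Inr (c, r))) y = {y, flip_bit y r c}"
proof
  show "subcube (part (Inr (c, r))) y \<subseteq> {y, flip_bit y r c}"
  proof
    fix z assume z: "z \<in> subcube (part (Inr (c, r))) y"
    show "z \<in> {y, flip_bit y r c}"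
    proof (cases "z r c = y r c")
      case True
      then have "z = y" using z unfolding subcube_def by (auto intro!: ext)
      then show ?thesis by simp
    next
      case False
      have "z i j = flip_bit y r c i j" for i j
        using z False unfolding subcube_def flip_bit_def by (cases "i = r \<and> j = c") auto
      then have "z = flip_bit y r c" by (auto intro!: ext)
      then show ?thesis by simp
    qed
  qed
qed (auto simp: subcube_def flip_bit_def)

section \<open>Approximate tensorisation on the generic set\<close>

definition slice :: "((nat \<times> nat) + (nat \<times> nat)) \<Rightarrow> tuple \<Rightarrow> tuple set" where
  "slice j y = subcube (part j) y \<inter> V"

text \<open>Bound on the fraction of \<open>subcube (part j) x\<close> lying outside \<open>V\<close>: of the \<open>2\<^sup>w\<close> values of
  a block of string \<open>r\<close>, at most \<open>k - 1\<close> collide with another string.\<close>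

definition defect :: "((nat \<times> nat) + (nat \<times> nat)) \<Rightarrow> real" where
  "defect j = (case j of Inl _ \<Rightarrow> real (k - 1) / 2 ^ w | Inr _ \<Rightarrow> 0)"

lemma defect_nonneg: "0 \<le> defect j"
  unfolding defect_def by (cases j) auto

lemma slice_self: "y \<in> V \<Longrightarrow> y \<in> slice j y"
  unfolding slice_def by simp

lemma slice_subset: "slice j y \<subseteq> V"
  unfolding slice_def by simp

lemma finite_slice: "j \<in> parts \<Longrightarrow> finite (slice j y)"
  unfolding slice_def using finite_subcube_part by auto

lemma slice_eq: "y \<in> slice j x \<Longrightarrow> slice j y = slice j x"
  unfolding slice_def using subcube_eq by auto

lemma card_subcube_diff_V_le:
  assumes j: "j \<in> parts" and ne: "slice j x \<noteq> {}"
  shows "real (card (subcube (part j) x - V)) \<le> defect j * real (card (subcube (part j) x))"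
    "card (subcube (part j) x - V) \<le> card (subcube (part j) x \<inter> V)"
proof -
  define Q where "Q = subcube (part j) x"
  obtain y where y: "y \<in> Q" "y \<in> V" using ne unfolding slice_def Q_def by auto
  have Qy: "subcube (part j) y = Q" unfolding Q_def using subcube_eq y(1)[unfolded Q_def] .
  have finQ: "finite Q" unfolding Q_def using finite_subcube_part[OF j] .
  have "real (card (Q - V)) \<le> defect j * real (card Q) \<and> card (Q - V) \<le> card (Q \<inter> V)"
  proof (cases j)
    case (Inl a)
    obtain l r where a: "j = Inl (l, r)" "l < p" "r < k" using j Inl unfolding parts_def by auto
    have out: "card (Q - V) \<le> k - 1" using card_subcube_Inl_diff_V[OF a(2,3) y(2)] Qy a(1) by simp
    have cQ: "card Q = 2 ^ w"
      unfolding Q_def a(1) using subcube_finite_card finite_B[OF a(2)] card_B[OF a(2)] by simp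
    have "2 * real k \<le> 2 * real p * real k ^ 2"
      using a(2) k_pos by (intro mult_mono) (auto simp: power2_eq_square)
    then have "2 * real k \<le> 2 ^ w" using two_ppar_k_sq_le_two_pow_wpar a(2) by force
    then have "real (2 * k) \<le> real (2 ^ w)" by simp
    then have "2 * k \<le> 2 ^ w" by (simp only: of_nat_le_iff)
    moreover have "card Q = card (Q - V) + card (Q \<inter> V)" using card_Int_Diff[OF finQ, of V] by simp
    moreover have "defect j * real (card Q) = real (k - 1)" using cQ a(1) by (simp add: defect_def)
    ultimately show ?thesis using out cQ by (simp flip: of_nat_le_iff)
  next
    case (Inr a)
    obtain c r where a: "j = Inr (c, r)" "c \<in> C" "r < k" using j Inr unfolding parts_def by auto
    have empty: "Q - V = {}" using subcube_Inr_subset_V[OF a(2,3) y(2)] Qy a(1) by auto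
    show ?thesis unfolding empty using a(1) by (simp add: defect_def)
  qed
  then show "real (card (Q - V)) \<le> defect j * real (card Q)" "card (Q - V) \<le> card (Q \<inter> V)"
    by auto
qed

lemma ent_subcube_extension_le:
  assumes j: "j \<in> parts" and f0: "\<And>y. y \<in> V \<Longrightarrow> 0 \<le> f y" and c0: "0 < c"
  defines "F \<equiv> (\<lambda>x. if x \<in> V then f x else c)"
  shows "real (card (subcube (part j) x)) * ent (subcube (part j) x) F
    \<le> real (card (slice j x)) * (ent (slice j x) f + 32 * sqrt (defect j) * bregman (avg (slice j x) f) c)"
proof -
  define Q where "Q = subcube (part j) x"
  define A where "A = slice j x"
  have finQ: "finite Q" unfolding Q_def by (rule finite_subcube_part[OF j])
  have AQ: "A = Q \<inter> V" unfolding A_def Q_def slice_def ..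
  have F0: "0 \<le> F y" for y unfolding F_def using f0 c0 by (simp add: less_imp_le)
  show ?thesis
  proof (cases "A = {}")
    case True
    then have "ent Q F = 0" by (intro ent_const[of Q F c]) (use AQ in \<open>auto simp: F_def\<close>)
    then show ?thesis using True unfolding Q_def A_def by simp
  next
    case False
    have QA: "Q - A = Q - V" using AQ by auto
    have cA: "0 < card A" using False finQ AQ by (simp add: card_gt_0_iff)
    have "real (card Q) * ent Q F \<le> real (card A) * ent A F
         + 32 * sqrt (real (card (Q - A)) / real (card Q)) * real (card A) * bregman (avg A F) c"
      by (rule ent_extend_const_le[OF finQ _ _ c0])
        (use AQ F0 cA card_subcube_diff_V_le(2)[OF j False[unfolded A_def]] QA in \<open>auto simp: F_def Q_def\<close>)
    also have "ent A F = ent A f" by (rule ent_cong) (use AQ in \<open>auto simp: F_def\<close>)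
    also have "avg A F = avg A f" by (rule avg_cong) (use AQ in \<open>auto simp: F_def\<close>)
    also have "sqrt (real (card (Q - A)) / real (card Q)) \<le> sqrt (defect j)"
      using card_subcube_diff_V_le(1)[OF j False[unfolded A_def]] QA finQ defect_nonneg
      by (simp add: Q_def divide_le_eq card_gt_0_iff)
    then have "32 * sqrt (real (card (Q - A)) / real (card Q)) * real (card A) * bregman (avg A f) c
        \<le> 32 * sqrt (defect j) * real (card A) * bregman (avg A f) c"
      using bregman_nonneg[OF avg_nonneg c0, of A f] f0 AQ by (auto intro!: mult_right_mono)
    finally show ?thesis unfolding Q_def A_def by (simp add: algebra_simps)
  qed
qed

lemma sum_ent_subcube_extension_le:
  assumes j: "j \<in> parts" and f0: "\<And>y. y \<in> V \<Longrightarrow> 0 \<le> f y" and c0: "0 < c"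
  defines "F \<equiv> (\<lambda>x. if x \<in> V then f x else c)"
  shows "(\<Sum>x\<in>cube. ent (subcube (part j) x) F)
     \<le> (\<Sum>y\<in>V. ent (slice j y) f + 32 * sqrt (defect j) * bregman (avg (slice j y) f) c)"
proof -
  define T where "T y = ent (slice j y) f + 32 * sqrt (defect j) * bregman (avg (slice j y) f) c" for y
  define G where "G y = (if y \<in> V then T y else 0)" for y
  have sumG: "(\<Sum>y\<in>subcube (part j) x. G y) = real (card (slice j x)) * T x" for x
  proof -
    have "(\<Sum>y\<in>subcube (part j) x. G y) = (\<Sum>y\<in>slice j x. T y)"
      unfolding G_def slice_def using finite_subcube_part[OF j]
      by (simp add: sum.inter_restrict[symmetric] Int_commute)
    also have "\<dots> = (\<Sum>y\<in>slice j x. T x)"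
      by (rule sum.cong) (simp_all add: T_def slice_eq)
    finally show ?thesis by simp
  qed
  have "(\<Sum>x\<in>cube. ent (subcube (part j) x) F)
      \<le> (\<Sum>x\<in>cube. (\<Sum>y\<in>subcube (part j) x. G y) / real (card (subcube (part j) x)))"
  proof (rule sum_mono)
    fix x
    have "subcube (part j) x \<noteq> {}" using subcube_self by blast
    then have "0 < real (card (subcube (part j) x))"
      using finite_subcube_part[OF j] by (auto simp: card_gt_0_iff)
    moreover have "real (card (subcube (part j) x)) * ent (subcube (part j) x) F
        \<le> (\<Sum>y\<in>subcube (part j) x. G y)"
      unfolding sumG F_def T_def by (rule ent_subcube_extension_le[where f = f, OF j f0 c0])
    ultimately show "ent (subcube (part j) x) F \<le> (\<Sum>y\<in>subcube (part j) x. G y) / real (card (subcube (part j) x))"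
      by (simp add: le_divide_eq mult.commute)
  qed
  also have "\<dots> = (\<Sum>x\<in>cube. G x)"
  proof (rule sum_avg_blocks[OF finite_cube])
    show "\<And>x. x \<in> subcube (part j) x" by simp
    show "\<And>x. x \<in> cube \<Longrightarrow> subcube (part j) x \<subseteq> cube"
      unfolding cube_def by (rule subcube_mono[OF part_subset_cells[OF j]])
    show "\<And>x y. y \<in> subcube (part j) x \<Longrightarrow> subcube (part j) y = subcube (part j) x" by (rule subcube_eq)
  qed
  also have "\<dots> = (\<Sum>y\<in>V. T y)"
    using sum.subset_diff[OF V_subset_cube finite_cube, of G] by (simp add: G_def)
  finally show ?thesis unfolding T_def .
qed

lemma sum_avg_slices:
  "j \<in> parts \<Longrightarrow> (\<Sum>y\<in>V. (\<Sum>z\<in>slice j y. h z) / real (card (slice j y))) = (\<Sum>y\<in>V. h y)"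
  by (rule sum_avg_blocks[OF finite_V]) (auto simp: slice_self slice_eq slice_subset[of j, THEN subsetD])

lemma sum_mult_ln_avg_slice:
  assumes j: "j \<in> parts"
  shows "(\<Sum>y\<in>V. f y * ln (f y / avg (slice j y) f)) = (\<Sum>y\<in>V. ent (slice j y) f)"
proof -
  have "ent (slice j y) f = (\<Sum>z\<in>slice j y. f z * ln (f z / avg (slice j z) f)) / real (card (slice j y))"
    for y unfolding ent_def by (simp add: slice_eq cong: sum.cong)
  then show ?thesis using sum_avg_slices[OF j] by simp
qed

lemma sum_bregman_slices:
  assumes j: "j \<in> parts" and f0: "\<And>y. y \<in> V \<Longrightarrow> 0 \<le> f y" and c: "c = avg V f" and c0: "0 < c"
  shows "(\<Sum>y\<in>V. bregman (avg (slice j y) f) c) = real (card V) * ent V f - (\<Sum>y\<in>V. ent (slice j y) f)"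
proof -
  define a where "a y = avg (slice j y) f" for y
  have "(\<Sum>y\<in>V. a y) = (\<Sum>y\<in>V. f y)" unfolding a_def avg_def by (rule sum_avg_slices[OF j])
  moreover have "(\<Sum>y\<in>V. a y * ln (a y / c)) = (\<Sum>y\<in>V. f y * ln (a y / c))"
  proof -
    have "a y * ln (a y / c) = (\<Sum>z\<in>slice j y. f z * ln (a z / c)) / real (card (slice j y))" for y
      unfolding a_def avg_def by (simp add: sum_distrib_right slice_eq cong: sum.cong)
    then show ?thesis using sum_avg_slices[OF j] by simp
  qed
  moreover have "(\<Sum>y\<in>V. f y * ln (f y / c)) = (\<Sum>y\<in>V. f y * ln (f y / a y)) + (\<Sum>y\<in>V. f y * ln (a y / c))"
  proof -
    have "0 < a y" if "y \<in> V" "0 < f y" for y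
      unfolding a_def using f0 that finite_slice[OF j] slice_subset[of j y] slice_self
      by (intro avg_pos[of _ f y]) auto
    then have "f y * ln (f y / c) = f y * ln (f y / a y) + f y * ln (a y / c)" if "y \<in> V" for y
      using that f0 c0 by (intro mult_ln_div_split) auto
    then show ?thesis by (simp add: sum.distrib[symmetric])
  qed
  moreover have "real (card V) * ent V f = (\<Sum>y\<in>V. f y * ln (f y / c))" unfolding card_mult_ent c ..
  moreover have "real (card V) * c = (\<Sum>y\<in>V. f y)" unfolding c card_mult_avg ..
  moreover have "(\<Sum>y\<in>V. bregman (a y) c) = (\<Sum>y\<in>V. a y * ln (a y / c)) - (\<Sum>y\<in>V. a y) + real (card V) * c"
    unfolding bregman_def by (simp add: sum.distrib sum_subtractf)
  ultimately show ?thesis using sum_mult_ln_avg_slice[OF j, of f] unfolding a_def by simp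
qed

lemma sum_sqrt_defect_le: "(\<Sum>j\<in>parts. 32 * sqrt (defect j)) \<le> 1/2"
proof (cases "p = 0")
  case False
  define M where "M = 64 * real p * real k"
  have M0: "0 < M" unfolding M_def using False k_pos by simp
  have "real (k - 1) / 2 ^ w \<le> real k / 2 ^ w" by (intro divide_right_mono) auto
  also have "\<dots> \<le> 1 / M^2"
  proof -
    have "M^2 * real k \<le> 2 ^ w" unfolding M_def using ppar_k_sq_le_two_pow_wpar False by simp
    then show ?thesis using M0 by (simp add: field_simps)
  qed
  finally have "sqrt (real (k - 1) / 2 ^ w) \<le> sqrt ((1 / M)^2)" by (simp add: power_divide)
  then have "sqrt (real (k - 1) / 2 ^ w) \<le> 1 / M" using M0 by simp
  then have "real p * real k * (32 * sqrt (real (k - 1) / 2 ^ w)) \<le> real p * real k * (32 / M)"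
    by (intro mult_left_mono) auto
  also have "\<dots> = 1/2" unfolding M_def using False k_pos by simp
  finally show ?thesis
    unfolding parts_def using finite_C by (simp add: sum.Plus defect_def comp_def case_prod_beta)
qed (simp add: parts_def sum.Plus defect_def finite_C)

text \<open>Extend \<open>f\<close> to the cube by its mean \<open>c\<close>, tensorise there, and go back to \<open>V\<close> slice by
  slice; the penalties add up to at most half of the left-hand side, which is then absorbed.\<close>

lemma ent_le_two_sum_ent_slices:
  assumes f0: "\<And>y. y \<in> V \<Longrightarrow> 0 \<le> f y" and c0: "0 < avg V f"
  shows "real (card V) * ent V f \<le> 2 * (\<Sum>j\<in>parts. \<Sum>y\<in>V. ent (slice j y) f)"
proof -
  define c where "c = avg V f"
  define F where "F = (\<lambda>x. if x \<in> V then f x else c)"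
  have cpos: "0 < c" using c0 unfolding c_def .
  define T where "T = real (card V) * ent V f"
  define E where "E j = (\<Sum>y\<in>V. ent (slice j y) f)" for j
  have F0: "0 \<le> F x" for x unfolding F_def using f0 cpos by (simp add: less_imp_le)
  have T0: "0 \<le> T" unfolding T_def using ent_nonneg[OF finite_V f0] by simp
  have "T \<le> real (card cube) * ent cube F"
    using ent_subset_le[OF finite_cube V_subset_cube, of F] F0 ent_cong[of V F f]
    unfolding T_def F_def by simp
  also have "\<dots> \<le> real (card cube) * (\<Sum>j\<in>parts. avg cube (\<lambda>x. ent (subcube (part j) x) F))"
    unfolding cube_def Union_parts[symmetric]
    by (intro mult_left_mono ent_subcube_tensorisation[OF finite_parts _ parts_disjoint F0]) (auto simp: finite_part)
  also have "\<dots> = (\<Sum>j\<in>parts. \<Sum>x\<in>cube. ent (subcube (part j) x) F)"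
    by (simp add: sum_distrib_left card_mult_avg)
  also have "\<dots> \<le> (\<Sum>j\<in>parts. E j + 32 * sqrt (defect j) * (T - E j))"
  proof (rule sum_mono)
    fix j assume j: "j \<in> parts"
    have "(\<Sum>x\<in>cube. ent (subcube (part j) x) F)
        \<le> (\<Sum>y\<in>V. ent (slice j y) f + 32 * sqrt (defect j) * bregman (avg (slice j y) f) c)"
      unfolding F_def by (rule sum_ent_subcube_extension_le[OF j f0 cpos])
    also have "\<dots> = E j + 32 * sqrt (defect j) * (T - E j)"
      using sum_bregman_slices[OF j f0 c_def cpos] unfolding E_def T_def
      by (simp add: sum.distrib sum_distrib_left[symmetric])
    finally show "(\<Sum>x\<in>cube. ent (subcube (part j) x) F) \<le> E j + 32 * sqrt (defect j) * (T - E j)" .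
  qed
  also have "\<dots> \<le> (\<Sum>j\<in>parts. E j + 32 * sqrt (defect j) * T)"
  proof (rule sum_mono)
    fix j assume "j \<in> parts"
    then have "0 \<le> E j" unfolding E_def
      by (intro sum_nonneg ent_nonneg finite_slice) (use f0 slice_subset in auto)
    then show "E j + 32 * sqrt (defect j) * (T - E j) \<le> E j + 32 * sqrt (defect j) * T"
      using defect_nonneg[of j] by (simp add: algebra_simps)
  qed
  also have "\<dots> \<le> (\<Sum>j\<in>parts. E j) + 1/2 * T"
    using mult_right_mono[OF sum_sqrt_defect_le T0] by (simp add: sum.distrib sum_distrib_right)
  finally show ?thesis unfolding T_def E_def by simp
qed

section \<open>Comparison with the Dirichlet form\<close>

definition block_var_sum :: "(tuple \<Rightarrow> real) \<Rightarrow> real" where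
  "block_var_sum g = (\<Sum>a\<in>{..<p} \<times> {..<k}. \<Sum>x\<in>V. var (slice (Inl a) x) g)"

definition bit_var_sum :: "(tuple \<Rightarrow> real) \<Rightarrow> real" where
  "bit_var_sum g = (\<Sum>a\<in>C \<times> {..<k}. \<Sum>x\<in>V. var (slice (Inr a) x) g)"

lemma block_var_sum_nonneg: "0 \<le> block_var_sum g"
  unfolding block_var_sum_def by (intro sum_nonneg var_nonneg)

lemma bit_var_sum_nonneg: "0 \<le> bit_var_sum g"
  unfolding bit_var_sum_def by (intro sum_nonneg var_nonneg)

lemma card_slice_Inl_le:
  assumes "a \<in> {..<p} \<times> {..<k}"
  shows "card (slice (Inl a) x) \<le> 2 ^ w"
proof -
  obtain l r where a: "a = (l, r)" "l < p" using assms by auto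
  have "card (slice (Inl a) x) \<le> card (subcube (part (Inl a)) x)"
    using assms by (intro card_mono finite_subcube_part) (auto simp: parts_def slice_def)
  also have "\<dots> = 2 ^ w" using subcube_finite_card finite_B[OF a(2)] card_B[OF a(2)] a(1) by simp
  finally show ?thesis .
qed

lemma slice_Inr: "a \<in> C \<times> {..<k} \<Longrightarrow> x \<in> V \<Longrightarrow> slice (Inr a) x = {x, flip_bit x (snd a) (fst a)}"
  using subcube_Inr_subset_V subcube_Inr unfolding slice_def by auto

lemma ent_le_var_sums:
  assumes f0: "\<And>y. y \<in> V \<Longrightarrow> 0 \<le> f y" and c0: "0 < avg V f"
  shows "real (card V) * ent V f
    \<le> 2 * ((6 + 2 * real w) * block_var_sum (\<lambda>x. sqrt (f x)) + 8 * bit_var_sum (\<lambda>x. sqrt (f x)))"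
proof -
  define g where "g x = sqrt (f x)" for x
  have local: "ent (slice j y) f \<le> (6 + 2 * ln (real (card (slice j y)))) * var (slice j y) g"
    if "j \<in> parts" "y \<in> V" for j y
  proof -
    have "slice j y \<noteq> {}" using slice_self[OF that(2)] by blast
    then show ?thesis unfolding g_def using f0 slice_subset
      by (intro ent_le_log_card_var finite_slice[OF that(1)]) auto
  qed
  have block: "ent (slice (Inl a) y) f \<le> (6 + 2 * real w) * var (slice (Inl a) y) g"
    if a: "a \<in> {..<p} \<times> {..<k}" and y: "y \<in> V" for a y
  proof -
    have "0 < card (slice (Inl a) y)"
      using a finite_slice[of "Inl a" y] slice_self[OF y] by (auto simp: parts_def card_gt_0_iff)
    then have "ln (real (card (slice (Inl a) y))) \<le> ln (2 ^ w)"
      using card_slice_Inl_le[OF a, of y] by (simp flip: of_nat_le_iff)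
    also have "\<dots> \<le> real w" using ln_2_less_1 by (simp add: ln_realpow mult_left_le)
    finally have "6 + 2 * ln (real (card (slice (Inl a) y))) \<le> 6 + 2 * real w" by simp
    moreover have "Inl a \<in> parts" using a by (auto simp: parts_def)
    ultimately show ?thesis
      using local[of "Inl a" y] y mult_right_mono[OF _ var_nonneg] by (meson order_trans)
  qed
  have bit: "ent (slice (Inr a) y) f \<le> 8 * var (slice (Inr a) y) g"
    if a: "a \<in> C \<times> {..<k}" and y: "y \<in> V" for a y
  proof -
    have "card (slice (Inr a) y) = 2"
      unfolding slice_Inr[OF a y] using flip_bit_neq[THEN not_sym] by (simp add: card_insert_if)
    then have "6 + 2 * ln (real (card (slice (Inr a) y))) \<le> 8" using ln_2_less_1 by simp
    moreover have "Inr a \<in> parts" using a by (auto simp: parts_def)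
    ultimately show ?thesis
      using local[of "Inr a" y] y mult_right_mono[OF _ var_nonneg] by (meson order_trans)
  qed
  have "real (card V) * ent V f \<le> 2 * (\<Sum>j\<in>parts. \<Sum>y\<in>V. ent (slice j y) f)"
    by (rule ent_le_two_sum_ent_slices[OF f0 c0])
  also have "(\<Sum>j\<in>parts. \<Sum>y\<in>V. ent (slice j y) f)
      = (\<Sum>a\<in>{..<p} \<times> {..<k}. \<Sum>y\<in>V. ent (slice (Inl a) y) f) + (\<Sum>a\<in>C \<times> {..<k}. \<Sum>y\<in>V. ent (slice (Inr a) y) f)"
    unfolding parts_def using finite_C by (simp add: sum.Plus comp_def)
  also have "\<dots> \<le> (6 + 2 * real w) * block_var_sum g + 8 * bit_var_sum g"
    unfolding block_var_sum_def bit_var_sum_def sum_distrib_left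
    by (intro add_mono sum_mono block bit) auto
  finally show ?thesis unfolding g_def by simp
qed

definition flip_energy :: "(tuple \<Rightarrow> real) \<Rightarrow> tuple \<Rightarrow> real" where
  "flip_energy g x = (\<Sum>a\<in>C \<times> {..<k}. (g x - g (flip_bit x (snd a) (fst a)))^2)"

definition resample_energy :: "(tuple \<Rightarrow> real) \<Rightarrow> tuple \<Rightarrow> real" where
  "resample_energy g x = (\<Sum>a\<in>{..<p} \<times> {..<k}. (\<Sum>y\<in>slice (Inl a) x. (g x - g y)^2) / real (card (slice (Inl a) x)))"

lemma sum_sq_diff_flip_count:
  assumes x: "x \<in> V"
  shows "(\<Sum>y\<in>V. (g x - g y)^2 * real (card {(c, r). c \<in> C \<and> r < k \<and> flip_bit x r c = y}))
    = flip_energy g x"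
proof -
  have "{(c, r). c \<in> C \<and> r < k \<and> flip_bit x r c = y} = {a \<in> C \<times> {..<k}. flip_bit x (snd a) (fst a) = y}"
    for y by auto
  then show ?thesis unfolding flip_energy_def
    using sum_mult_card_fibres[of "C \<times> {..<k}" V "\<lambda>a. flip_bit x (snd a) (fst a)" "\<lambda>y. (g x - g y)^2"]
      finite_C finite_V subcube_Inr_subset_V[OF _ _ x] subcube_Inr
    by auto
qed

lemma sum_sq_diff_resample:
  assumes x: "x \<in> V"
  shows "(\<Sum>y\<in>V. (g x - g y)^2 * (\<Sum>l<p. \<Sum>r<k.
      if y \<in> repl_set k B x l r then 1 / real (card (repl_set k B x l r)) else 0)) = resample_energy g x"
proof -
  have "(\<Sum>y\<in>V. (g x - g y)^2 * (if y \<in> repl_set k B x l r then 1 / real (card (repl_set k B x l r)) else 0))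
      = (\<Sum>y\<in>slice (Inl (l, r)) x. (g x - g y)^2) / real (card (slice (Inl (l, r)) x))"
    if "l < p" "r < k" for l r
  proof -
    have "repl_set k B x l r = slice (Inl (l, r)) x"
      unfolding slice_def using subcube_Inl_inter_V[OF that x] ..
    moreover have "V \<inter> slice (Inl (l, r)) x = slice (Inl (l, r)) x" using slice_subset by blast
    ultimately show ?thesis
      using sum.inter_restrict[OF finite_V, of "\<lambda>y. (g x - g y)^2 / real (card (slice (Inl (l, r)) x))"
          "slice (Inl (l, r)) x"]
      by (simp add: if_distrib sum_divide_distrib cong: if_cong)
  qed
  then have "(\<Sum>l<p. \<Sum>r<k. \<Sum>y\<in>V. (g x - g y)^2 *
      (if y \<in> repl_set k B x l r then 1 / real (card (repl_set k B x l r)) else 0)) = resample_energy g x"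
    unfolding resample_energy_def sum.cartesian_product' by (intro sum.cong refl) simp_all
  then show ?thesis by (simp add: sum_distrib_left sum.swap[of _ V])
qed

lemma sum_sq_diff_P_grev:
  assumes x: "x \<in> V"
  shows "(\<Sum>y\<in>V. (g x - g y)^2 * P_grev k n B C x y)
    = (1/4) * flip_energy g x / (real (card C) * real k) + (1/2) * resample_energy g x / (real p * real k)"
proof -
  have "(\<Sum>y\<in>V. (g x - g y)^2 * (if x = y then 1/4 else 0)) = 0" by (rule sum.neutral) auto
  then show ?thesis
    unfolding P_grev_def sum_sq_diff_flip_count[OF x, symmetric] sum_sq_diff_resample[OF x, symmetric]
    by (simp add: distrib_left sum.distrib sum_distrib_left sum_divide_distrib mult.assoc mult.left_commute)
qed

lemma sum_flip_energy: "(\<Sum>x\<in>V. flip_energy g x) = 4 * bit_var_sum g"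
proof -
  have "(g x - g (flip_bit x (snd a) (fst a)))^2 = 4 * var (slice (Inr a) x) g"
    if "a \<in> C \<times> {..<k}" "x \<in> V" for a x
    unfolding slice_Inr[OF that] var_doubleton[OF flip_bit_neq[THEN not_sym]] by simp
  then show ?thesis unfolding flip_energy_def bit_var_sum_def sum_distrib_left
    by (subst sum.swap) (simp add: sum_distrib_left)
qed

lemma sum_resample_energy: "(\<Sum>x\<in>V. resample_energy g x) = 2 * block_var_sum g"
proof -
  have "(\<Sum>x\<in>V. (\<Sum>y\<in>slice (Inl a) x. (g x - g y)^2) / real (card (slice (Inl a) x)))
      = (\<Sum>x\<in>V. 2 * var (slice (Inl a) x) g)" if "a \<in> {..<p} \<times> {..<k}" for a
    by (rule sum_avg_sq_diff_blocks[OF finite_V])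
      (auto simp: slice_self slice_eq slice_subset[of "Inl a", THEN subsetD])
  then show ?thesis unfolding resample_energy_def block_var_sum_def
    by (subst sum.swap) (simp add: sum_distrib_left)
qed

lemma dirichlet_form_eq:
  "dirichlet_form V (uniform_on V) (P_grev k n B C) g
     = (bit_var_sum g / (real (card C) * real k) + block_var_sum g / (real p * real k)) / (2 * real (card V))"
proof -
  have "dirichlet_form V (uniform_on V) (P_grev k n B C) g
      = (1/2) * (1 / real (card V)) * (\<Sum>x\<in>V. \<Sum>y\<in>V. (g x - g y)^2 * P_grev k n B C x y)"
    unfolding dirichlet_form_def uniform_on_def by (simp add: sum_distrib_left algebra_simps)
  also have "\<dots> = (1/2) * (1 / real (card V)) * ((1/4) * (\<Sum>x\<in>V. flip_energy g x) / (real (card C) * real k)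
      + (1/2) * (\<Sum>x\<in>V. resample_energy g x) / (real p * real k))"
    by (simp add: sum_sq_diff_P_grev sum.distrib sum_divide_distrib sum_distrib_left cong: sum.cong)
  also have "\<dots> = (bit_var_sum g / (real (card C) * real k) + block_var_sum g / (real p * real k)) / (2 * real (card V))"
    unfolding sum_flip_energy sum_resample_energy by (simp add: field_simps)
  finally show ?thesis .
qed

definition collisions :: "nat \<Rightarrow> nat \<Rightarrow> nat \<Rightarrow> tuple set" where
  "collisions l i i' = {x \<in> cube. \<forall>j\<in>B l. x i j = x i' j}"

lemma card_collisions_le:
  assumes l: "l < p" and i: "i < k" and i': "i' < k" and ii: "i \<noteq> i'"
  shows "real (card (collisions l i i')) * 2 ^ w \<le> real (card cube)"
proof -
  define D where "D = {i'} \<times> B l"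
  define A where "A = collisions l i i'"
  define h where "h y = (if y \<in> A then (1::real) else 0)" for y
  have finD: "finite D" and cardD: "card D = w" unfolding D_def using finite_B[OF l] card_B[OF l] by auto
  have D_cells: "D \<subseteq> cells" unfolding D_def cells_def using i' B_subset[OF l] by auto
  have A_cube: "A \<subseteq> cube" unfolding A_def collisions_def by auto
  \<comment> \<open>Within a subcube along \<open>D\<close> only the \<open>i'\<close>-th row on \<open>C\<^sub>l\<close> varies, and a collision pins it down.\<close>
  have at_most_one: "(\<Sum>y\<in>subcube D x. h y) \<le> 1" for x
  proof -
    have "a r j = b r j" if "a \<in> subcube D x \<inter> A" "b \<in> subcube D x \<inter> A" for a b r j
    proof (cases "(r, j) \<in> D")
      case True
      then have rj: "r = i'" "j \<in> B l" and "(i, j) \<notin> D" unfolding D_def using ii by auto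
      then have "a i j = x i j" "b i j = x i j" using that unfolding subcube_def by auto
      moreover have "a i j = a i' j" "b i j = b i' j" using that rj unfolding A_def collisions_def by auto
      ultimately show ?thesis using rj by simp
    qed (use that in \<open>auto simp: subcube_def\<close>)
    then have "card (subcube D x \<inter> A) \<le> 1"
      using subcube_finite_card(1)[OF finD] by (auto simp: card_le_Suc0_iff_eq intro!: ext)
    then show ?thesis unfolding h_def using subcube_finite_card(1)[OF finD] by (simp add: sum.If_cases)
  qed
  have "real (card A) = (\<Sum>x\<in>cube. h x)"
    unfolding h_def using A_cube finite_cube by (simp add: sum.If_cases Int_absorb1[OF A_cube, unfolded Int_commute[of A]])
  also have "\<dots> = (\<Sum>x\<in>cube. (\<Sum>y\<in>subcube D x. h y) / real (card (subcube D x)))"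
    by (rule sum_avg_blocks[OF finite_cube, symmetric])
      (auto simp: subcube_eq cube_def intro: subcube_mono[OF D_cells, THEN subsetD])
  also have "\<dots> \<le> (\<Sum>x\<in>cube. 1 / 2 ^ w)"
    using at_most_one subcube_finite_card(2)[OF finD] cardD by (intro sum_mono) (simp add: divide_right_mono)
  finally show ?thesis unfolding A_def by (simp add: field_simps)
qed

lemma cube_minus_V_subset: "cube - V \<subseteq> (\<Union>l<p. \<Union>i<k. \<Union>i'\<in>{..<k} - {i}. collisions l i i')"
proof
  fix x assume x: "x \<in> cube - V"
  then obtain i i' t where "i < k" "i' < k" "i \<noteq> i'" "t < p" "\<forall>j\<in>B t. x i j = x i' j"
    using mem_V_iff by auto
  then show "x \<in> (\<Union>l<p. \<Union>i<k. \<Union>i'\<in>{..<k} - {i}. collisions l i i')"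
    using x unfolding collisions_def by blast
qed

lemma two_le_card_V: "2 \<le> card V"
proof (cases "p = 0")
  case True
  then have "V = cube" using cube_minus_V_subset V_subset_cube by auto
  moreover have "(2::nat) ^ 1 \<le> 2 ^ (k * n)" using k_pos n_pos by (intro power_increasing) auto
  ultimately show ?thesis using card_cube by simp
next
  case False
  have "card (cube - V) \<le> card (\<Union>l<p. \<Union>i<k. \<Union>i'\<in>{..<k} - {i}. collisions l i i')"
    by (rule card_mono[OF _ cube_minus_V_subset]) (auto simp: collisions_def intro: finite_subset[OF _ finite_cube])
  also have "\<dots> \<le> (\<Sum>l<p. \<Sum>i<k. \<Sum>i'\<in>{..<k} - {i}. card (collisions l i i'))"
    by (intro order_trans[OF card_UN_le] sum_mono) auto
  finally have "real (card (cube - V)) \<le> real (\<Sum>l<p. \<Sum>i<k. \<Sum>i'\<in>{..<k} - {i}. card (collisions l i i'))"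
    by (simp only: of_nat_le_iff)
  also have "\<dots> \<le> (\<Sum>l<p. \<Sum>i<k. \<Sum>i'\<in>{..<k} - {i}. real (card cube) / 2 ^ w)"
    unfolding of_nat_sum using card_collisions_le by (intro sum_mono) (auto simp: field_simps)
  also have "\<dots> = real p * (real k * (real (k - 1) * (real (card cube) / 2 ^ w)))"
    using k_pos by (simp add: card_Diff_subset)
  also have "\<dots> \<le> real p * (real k * (real k * (real (card cube) / 2 ^ w)))"
    by (intro mult_left_mono mult_right_mono) auto
  also have "\<dots> \<le> real (card cube) / 2"
  proof -
    have "2 * real p * real k ^ 2 * real (card cube) \<le> 2 ^ w * real (card cube)"
      using two_ppar_k_sq_le_two_pow_wpar False by (intro mult_right_mono) auto
    then show ?thesis by (simp add: field_simps power2_eq_square)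
  qed
  finally have "real (card cube) / 2 \<le> real (card V)"
    using card_Diff_subset[OF finite_V V_subset_cube] card_mono[OF finite_cube V_subset_cube] by simp
  moreover have "(2::real) ^ 2 \<le> 2 ^ (k * n)"
    using mult_le_mono[of 1 k 21 n] n_ge_21 False k_pos by (intro power_increasing) auto
  ultimately show ?thesis using card_cube by simp
qed

lemma ent_le_dirichlet_form:
  assumes f0: "\<And>x. x \<in> V \<Longrightarrow> 0 \<le> f x" and c0: "0 < avg V f"
  shows "ent V f \<le> 32 * real n * real k * dirichlet_form V (uniform_on V) (P_grev k n B C) (\<lambda>x. sqrt (f x))"
proof -
  define g where "g x = sqrt (f x)" for x
  have cV: "0 < real (card V)" using two_le_card_V by simp
  have bits: "16 * bit_var_sum g \<le> 16 * real n * (bit_var_sum g / real (card C))"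
  proof (cases "card C = 0")
    case False
    have "real (card C) \<le> real n" using card_mono[OF _ C_subset] by simp
    then have "bit_var_sum g \<le> real n * (bit_var_sum g / real (card C))"
      using False bit_var_sum_nonneg[of g] by (simp add: field_simps mult_right_mono)
    then show ?thesis by simp
  next
    case True
    then have "bit_var_sum g = 0" unfolding bit_var_sum_def using finite_C by simp
    then show ?thesis by simp
  qed
  have blocks: "2 * (6 + 2 * real w) * block_var_sum g \<le> 16 * real n * (block_var_sum g / real p)"
  proof (cases "p = 0")
    case False
    have "2 * (6 + 2 * real w) * block_var_sum g = ((12 + 4 * real w) * real p) * (block_var_sum g / real p)"
      using False by (simp add: field_simps)
    also have "\<dots> \<le> 16 * real n * (block_var_sum g / real p)"
      using wpar_ppar_le False block_var_sum_nonneg[of g] by (intro mult_right_mono) auto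
    finally show ?thesis .
  qed (simp add: block_var_sum_def)
  have "real (card V) * ent V f \<le> 2 * ((6 + 2 * real w) * block_var_sum g + 8 * bit_var_sum g)"
    unfolding g_def by (rule ent_le_var_sums[OF f0 c0])
  also have "\<dots> \<le> 16 * real n * (bit_var_sum g / real (card C)) + 16 * real n * (block_var_sum g / real p)"
    using bits blocks by (simp add: algebra_simps)
  also have "\<dots> = real (card V) * (32 * real n * real k * dirichlet_form V (uniform_on V) (P_grev k n B C) g)"
    unfolding dirichlet_form_eq using cV k_pos by (simp add: field_simps)
  finally show ?thesis unfolding g_def using cV by simp
qed

end

theorem mainTheorem9:
  "\<exists>c::real > 0. \<forall>n k :: nat. \<forall>B :: nat \<Rightarrow> nat set. \<forall>C :: nat set.
     0 < n \<longrightarrow> 0 < k \<longrightarrow> real k \<le> 2 powr (real n / 50) \<longrightarrow>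
     real (wpar k n) < real n / 2 \<longrightarrow>
     (\<forall>t<ppar k n. B t \<subseteq> {..<n} \<and> card (B t) = wpar k n) \<longrightarrow>
     (\<forall>t<ppar k n. \<forall>t'<ppar k n. t \<noteq> t' \<longrightarrow> B t \<inter> B t' = {}) \<longrightarrow>
     C = {..<n} - (\<Union>t<ppar k n. B t) \<longrightarrow>
     log_sobolev (generic_set k n B) (uniform_on (generic_set k n B)) (P_grev k n B C)
       \<ge> c / (real n * real k)"
proof (intro exI[of _ "1/32"] conjI allI impI)
  fix n k :: nat and B :: "nat \<Rightarrow> nat set" and C :: "nat set"
  assume "0 < n" "0 < k" "real (wpar k n) < real n / 2"
    "\<forall>t<ppar k n. B t \<subseteq> {..<n} \<and> card (B t) = wpar k n"
    "\<forall>t<ppar k n. \<forall>t'<ppar k n. t \<noteq> t' \<longrightarrow> B t \<inter> B t' = {}"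
    "C = {..<n} - (\<Union>t<ppar k n. B t)"
  then interpret generic_setup n k B C by unfold_locales
  have "1 / (32 * real n * real k) \<le> log_sobolev V (uniform_on V) (P_grev k n B C)"
    using finite_V two_le_card_V n_pos k_pos ent_le_dirichlet_form
    by (intro log_sobolev_ge) auto
  then show "1/32 / (real n * real k) \<le> log_sobolev V (uniform_on V) (P_grev k n B C)"
    by (simp add: field_simps)
qed simp

end
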